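(* In $\mathscr{B}_n^k$, for every $i$ with $1\le i\le n-1$ and every integer $p$: (I) $e_i (Y_i')^{p} e_i$ lies in the $R$-span of $\{Y^{s_1}(Y_2')^{s_2}\cdots (Y_{i-1}')^{s_{i-1}} e_i : s_1,\dots,s_{i-1}\in\mathbb Z\}$; (II) $X_i (Y_i')^{p} e_i$ lies in the $R$-span of $\{Y^{s_1}(Y_2')^{s_2}\cdots (Y_{i-1}')^{s_{i-1}}(Y_i')^{s_i} e_i : s_1,\dots,s_i\in\mathbb Z,\ |s_i|\le |p|\}$; (III) $e_i (Y_i')^{p} X_i$ lies in the $R$-span of $\{e_i Y^{s_1}(Y_2')^{s_2}\cdots (Y_{i-1}')^{s_{i-1}}(Y_i')^{s_i} : s_1,\dots,s_i\in\mathbb Z,\ |s_i|\le |p|\}$.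
   Context: Fix integers $n\ge 1$, $k\ge 1$. Let $R$ be a unital commutative ring containing units $q_0,q,\lambda$ and further elements $q_1,\dots,q_{k-1},A_0,\dots,A_{k-1}$ such that $\lambda-\lambda^{-1}=\delta(1-A_0)$, where $\delta:=q-q^{-1}$. The cyclotomic BMW algebra $\mathscr{B}_n^k=\mathscr{B}_n^k(R)$ is the unital associative $R$-algebra generated by $Y^{\pm1},X_1^{\pm1},\dots,X_{n-1}^{\pm1},e_1,\dots,e_{n-1}$ subject to the following relations (for all indices for which they make sense): $X_i-X_i^{-1}=\delta(1-e_i)$; $X_iX_j=X_jX_i$, $X_ie_j=e_jX_i$, $e_ie_j=e_je_i$ for $|i-j|\ge 2$; $X_iX_{i+1}X_i=X_{i+1}X_iX_{i+1}$; $X_ie_i=e_iX_i=\lambda e_i$; $X_iX_je_i=e_je_i=e_jX_iX_j$ for $|i-j|=1$; $e_ie_{i\pm1}e_i=e_i$; $e_i^2=A_0e_i$; $Y^k=\sum_{i=0}^{k-1}q_iY^i$; $X_1YX_1Y=YX_1YX_1$; $YX_i=X_iY$ and $Ye_i=e_iY$ for $i>1$; $YX_1Ye_1=\lambda^{-1}e_1=e_1YX_1Y$; $e_1Y^me_1=A_me_1$ for $0\le m\le k-1$. For $1\le i\le n$ put $Y_i':=X_{i-1}\cdots X_2X_1\,Y\,X_1X_2\cdots X_{i-1}$ (so $Y_1'=Y$). (When $i=1$ the product $Y^{s_1}\cdots(Y_{i-1}')^{s_{i-1}}$ is empty, i.e. equal to $1$.) *)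

theory Defs
  imports Main
begin

definition zpow :: "'a::monoid_mult \<Rightarrow> 'a \<Rightarrow> int \<Rightarrow> 'a" where
  "zpow u v p = (if 0 \<le> p then u ^ nat p else v ^ nat (- p))"

text \<open>Yp Y X i = X(i-1) ... X1 Y X1 ... X(i-1)  (Y_i'), for i >= 1.
  Applied to the inverses (Yinv, Xinv) it gives the inverse of Y_i'.\<close>
fun Yp :: "'a::monoid_mult \<Rightarrow> (nat \<Rightarrow> 'a) \<Rightarrow> nat \<Rightarrow> 'a" where
  "Yp Y X 0 = Y"
| "Yp Y X (Suc 0) = Y"
| "Yp Y X (Suc (Suc i)) = X (Suc i) * Yp Y X (Suc i) * X (Suc i)"

definition Ymon :: "'a::monoid_mult \<Rightarrow> 'a \<Rightarrow> (nat \<Rightarrow> 'a) \<Rightarrow> (nat \<Rightarrow> 'a) \<Rightarrow> (nat \<Rightarrow> int) \<Rightarrow> nat \<Rightarrow> 'a" where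
  "Ymon Y Yinv X Xinv s m =
     prod_list (map (\<lambda>j. zpow (Yp Y X j) (Yp Yinv Xinv j) (s j)) [1..<Suc m])"

definition rspan :: "('r \<Rightarrow> 'a::ring_1) \<Rightarrow> 'a set \<Rightarrow> 'a set" where
  "rspan \<phi> S = {x. \<exists>F c. finite F \<and> F \<subseteq> S \<and> x = (\<Sum>s\<in>F. \<phi> (c s) * s)}"

definition is_R_algebra :: "('r::comm_ring_1 \<Rightarrow> 'a::ring_1) \<Rightarrow> bool" where
  "is_R_algebra \<phi> \<longleftrightarrow> \<phi> 1 = 1 \<and> (\<forall>a b. \<phi> (a + b) = \<phi> a + \<phi> b) \<and>
     (\<forall>a b. \<phi> (a * b) = \<phi> a * \<phi> b) \<and> (\<forall>r x. \<phi> r * x = x * \<phi> r)"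

text \<open>Defining relations of the cyclotomic BMW algebra B_n^k, imposed on elements
  Y, Yinv, X i, Xinv i, e i (1 <= i <= n-1) of an R-algebra.  Parameters:
  qp = q, qi = q^{-1}, lam = lambda, lami = lambda^{-1}, qq j = q_j, A j = A_j.\<close>
definition cbmw_rels ::
  "nat \<Rightarrow> nat \<Rightarrow> ('r::comm_ring_1 \<Rightarrow> 'a::ring_1) \<Rightarrow> 'r \<Rightarrow> 'r \<Rightarrow> 'r \<Rightarrow> 'r \<Rightarrow>
   (nat \<Rightarrow> 'r) \<Rightarrow> (nat \<Rightarrow> 'r) \<Rightarrow> 'a \<Rightarrow> 'a \<Rightarrow> (nat \<Rightarrow> 'a) \<Rightarrow> (nat \<Rightarrow> 'a) \<Rightarrow> (nat \<Rightarrow> 'a) \<Rightarrow> bool"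
where
  "cbmw_rels n k \<phi> qp qi lam lami qq A Y Yinv X Xinv e \<longleftrightarrow>
    (let \<delta> = qp - qi; ok = (\<lambda>i. 1 \<le> i \<and> i \<le> n - 1) in
     Y * Yinv = 1 \<and> Yinv * Y = 1 \<and>
     (\<forall>i. ok i \<longrightarrow> X i * Xinv i = 1 \<and> Xinv i * X i = 1) \<and>
     (\<forall>i. ok i \<longrightarrow> X i - Xinv i = \<phi> \<delta> * (1 - e i)) \<and>
     (\<forall>i j. ok i \<and> ok j \<and> (i + 2 \<le> j \<or> j + 2 \<le> i) \<longrightarrow>
        X i * X j = X j * X i \<and> X i * e j = e j * X i \<and> e i * e j = e j * e i) \<and>
     (\<forall>i. ok i \<and> ok (i + 1) \<longrightarrow> X i * X (i+1) * X i = X (i+1) * X i * X (i+1)) \<and>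
     (\<forall>i. ok i \<longrightarrow> X i * e i = \<phi> lam * e i \<and> e i * X i = \<phi> lam * e i) \<and>
     (\<forall>i j. ok i \<and> ok j \<and> (j = i + 1 \<or> i = j + 1) \<longrightarrow>
        X i * X j * e i = e j * e i \<and> e j * e i = e j * X i * X j \<and>
        e i * e j * e i = e i) \<and>
     (\<forall>i. ok i \<longrightarrow> e i * e i = \<phi> (A 0) * e i) \<and>
     Y ^ k = (\<Sum>i<k. \<phi> (qq i) * Y ^ i) \<and>
     (ok 1 \<longrightarrow> X 1 * Y * X 1 * Y = Y * X 1 * Y * X 1) \<and>
     (\<forall>i. ok i \<and> 1 < i \<longrightarrow> Y * X i = X i * Y \<and> Y * e i = e i * Y) \<and>
     (ok 1 \<longrightarrow> Y * X 1 * Y * e 1 = \<phi> lami * e 1 \<and> e 1 * Y * X 1 * Y = \<phi> lami * e 1) \<and>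
     (ok 1 \<longrightarrow> (\<forall>m<k. e 1 * Y ^ m * e 1 = \<phi> (A m) * e 1)))"

end

theory Submission
  imports Defs
begin

text \<open>
  Write J_i for Y_i'.  Part (I) is proved by induction on the level i; at each level parts
  (II) and (III) are derived from part (I) at the same level.

  Inside the locale cbmw
  of the defining relations we then show that the J_i are invertible and pairwise
  commute, that J_i commutes with X_m^{\<plusminus>1} and e_m for m > i, and the key identity
  J_i J_{i+1} e_i = e_i = e_i J_i J_{i+1}: on e_i, J_{i+1} acts as J_i^{-1}.  Hence ordered
  monomials in J_1, ..., J_m multiply by adding exponents.

  (II) and (III) follow from (I) by induction on |p|, using X_i J_i = J_{i+1} X_i^{-1} and
  the skein relation X_i^{-1} = X_i - \<delta> + \<delta> e_i.  For (I), the case i = 1 reduces via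
  Y^k = \<Sum> q_j Y^j (q_0 a unit) to e_1 Y^m e_1 = A_m e_1.  The step j \<rightarrow> j+1 is a strong
  induction on |p|: e_{j+1} J_{j+1}^p e_{j+1} is rewritten through the auxiliary span
  step_gens, whose generators are absorbed using (I) and (III) at level j.
\<close>

section \<open>Products in monoids and integer powers\<close>

lemma zpow_0 [simp]: "zpow u v 0 = 1"
  by (simp add: zpow_def)

lemma zpow_1 [simp]: "zpow u v 1 = u"
  by (simp add: zpow_def)

lemma zpow_minus_1 [simp]: "zpow u v (-1) = v"
  by (simp add: zpow_def)

lemma zpow_commute:
  fixes u v w :: "'a::monoid_mult"
  assumes "u * w = w * u" "v * w = w * v"
  shows "zpow u v p * w = w * zpow u v p"
  unfolding zpow_def using assms by (auto intro: power_commuting_commutes)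

lemma inverse_commute:
  fixes u v w :: "'a::monoid_mult"
  assumes "u * v = 1" "v * u = 1" "u * w = w * u"
  shows "v * w = w * v"
proof -
  have "v * w = v * w * (u * v)" using assms by simp
  also have "\<dots> = v * (u * w) * v" using assms(3) by (simp add: mult.assoc)
  also have "\<dots> = w * v" using assms(2) by (simp add: mult.assoc[symmetric])
  finally show ?thesis .
qed

lemma mult_eq_extend: "a * b = c \<Longrightarrow> a * (b * x) = c * (x::'a::semigroup_mult)"
  by (simp add: mult.assoc[symmetric])

lemma commute_sandwich:
  fixes a z w :: "'a::semigroup_mult"
  assumes "a * w = w * a" "z * w = w * z"
  shows "(a * z * a) * w = w * (a * z * a)"
  using assms by (metis mult.assoc)

text \<open>Induction over the integers moving away from zero; used for statements whose
  bounds depend on |p|.\<close>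
lemma int_induct_from_zero [case_names zero up down]:
  fixes P :: "int \<Rightarrow> bool"
  assumes zero: "P 0"
    and up: "\<And>p. 0 \<le> p \<Longrightarrow> P p \<Longrightarrow> P (p + 1)"
    and down: "\<And>p. p \<le> 0 \<Longrightarrow> P p \<Longrightarrow> P (p - 1)"
  shows "P p"
proof -
  have "P (int m) \<and> P (- int m)" for m
  proof (induction m)
    case (Suc m)
    then have "P (int m + 1)" "P (- int m - 1)" using up down by auto
    moreover have "int (Suc m) = int m + 1" "- int (Suc m) = - int m - 1" by simp_all
    ultimately show ?case by metis
  qed (use zero in simp)
  moreover have "p = int (nat \<bar>p\<bar>) \<or> p = - int (nat \<bar>p\<bar>)" by linarith
  ultimately show ?thesis by metis
qed

context
  fixes u v :: "'a::monoid_mult"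
  assumes uv: "u * v = 1" and vu: "v * u = 1"
begin

lemma zpow_succ: "zpow u v (p + 1) = u * zpow u v p"
proof (cases "0 \<le> p")
  case True
  then have "nat (p + 1) = Suc (nat p)" by simp
  then show ?thesis using True by (simp add: zpow_def)
next
  case False
  then have "nat (- p) = Suc (nat (- (p + 1)))" by simp
  then have "zpow u v p = v * zpow u v (p + 1)" using False by (auto simp: zpow_def)
  then show ?thesis using uv by (simp add: mult.assoc[symmetric])
qed

lemma zpow_succ': "zpow u v (p + 1) = zpow u v p * u"
proof (cases "0 \<le> p")
  case True
  then have "nat (p + 1) = Suc (nat p)" by simp
  then show ?thesis using True by (simp add: zpow_def power_commutes)
next
  case False
  then have "nat (- p) = Suc (nat (- (p + 1)))" by simp
  then have "zpow u v p = zpow u v (p + 1) * v" using False by (auto simp: zpow_def power_commutes)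
  then show ?thesis using vu by (simp add: mult.assoc)
qed

lemma zpow_pred: "zpow u v (p - 1) = v * zpow u v p"
  using zpow_succ[of "p - 1"] vu by (simp add: mult.assoc[symmetric])

lemma zpow_pred': "zpow u v (p - 1) = zpow u v p * v"
  using zpow_succ'[of "p - 1"] uv by (simp add: mult.assoc)

lemma zpow_add: "zpow u v (p + q) = zpow u v p * zpow u v q"
proof (induction q rule: int_induct[where k = 0])
  case base then show ?case by simp
next
  case (step1 q)
  then show ?case using zpow_succ'[of "p + q"] zpow_succ'[of q] by (simp add: add.assoc mult.assoc)
next
  case (step2 q)
  then show ?case using zpow_pred'[of "p + q"] zpow_pred'[of q] by (simp add: algebra_simps)
qed

end

text \<open>If u acts on x like the inverse w' of a commuting invertible w (from the left), then
  u^t acts on x like w^{-t}.  This is how J_{i+1} acts on e_i.\<close>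
lemma zpow_transfer_left:
  fixes u v :: "'a::monoid_mult"
  assumes uv: "u * v = 1" and vu: "v * u = 1" and ww: "w * w' = 1" "w' * w = 1" and c: "u * w = w * u"
    and ux: "u * x = w' * x" and vx: "v * x = w * x"
  shows "zpow u v t * x = zpow w w' (- t) * x"
proof -
  have c': "u * w' = w' * u" using inverse_commute[OF ww c[symmetric]] by simp
  have z': "zpow u v t * w' = w' * zpow u v t" for t
    using zpow_commute[OF c' inverse_commute[OF uv vu c']] .
  have z: "zpow u v t * w = w * zpow u v t" for t
    using zpow_commute[OF c inverse_commute[OF uv vu c]] .
  show ?thesis
  proof (induction t rule: int_induct[where k = 0])
    case base then show ?case by simp
  next
    case (step1 t)
    have "zpow u v (t + 1) * x = zpow u v t * (u * x)" using zpow_succ'[OF uv vu] by (simp add: mult.assoc)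
    also have "\<dots> = w' * (zpow u v t * x)" using ux z' by (metis mult.assoc)
    also have "\<dots> = zpow w w' (- t - 1) * x"
      using step1 zpow_pred[OF ww, of "- t"] by (simp add: mult.assoc)
    finally show ?case by simp
  next
    case (step2 t)
    have "zpow u v (t - 1) * x = zpow u v t * (v * x)" using zpow_pred'[OF uv vu] by (simp add: mult.assoc)
    also have "\<dots> = w * (zpow u v t * x)" using vx z by (metis mult.assoc)
    also have "\<dots> = zpow w w' (- t + 1) * x"
      using step2 zpow_succ[OF ww, of "- t"] by (simp add: mult.assoc)
    finally show ?case by simp
  qed
qed

lemma zpow_transfer_right:
  fixes u v :: "'a::monoid_mult"
  assumes uv: "u * v = 1" and vu: "v * u = 1" and ww: "w * w' = 1" "w' * w = 1" and c: "u * w = w * u"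
    and xu: "x * u = x * w'" and xv: "x * v = x * w"
  shows "x * zpow u v t = x * zpow w w' (- t)"
proof -
  have c': "u * w' = w' * u" using inverse_commute[OF ww c[symmetric]] by simp
  have z': "zpow u v t * w' = w' * zpow u v t" for t
    using zpow_commute[OF c' inverse_commute[OF uv vu c']] .
  have z: "zpow u v t * w = w * zpow u v t" for t
    using zpow_commute[OF c inverse_commute[OF uv vu c]] .
  show ?thesis
  proof (induction t rule: int_induct[where k = 0])
    case base then show ?case by simp
  next
    case (step1 t)
    have "x * zpow u v (t + 1) = (x * u) * zpow u v t" using zpow_succ[OF uv vu] by (simp add: mult.assoc)
    also have "\<dots> = (x * zpow u v t) * w'" using xu z' by (metis mult.assoc)
    also have "\<dots> = x * zpow w w' (- t - 1)"
      using step1 zpow_pred'[OF ww, of "- t"] by (simp add: mult.assoc)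
    finally show ?case by simp
  next
    case (step2 t)
    have "x * zpow u v (t - 1) = (x * v) * zpow u v t" using zpow_pred[OF uv vu] by (simp add: mult.assoc)
    also have "\<dots> = (x * zpow u v t) * w" using xv z by (metis mult.assoc)
    also have "\<dots> = x * zpow w w' (- t + 1)"
      using step2 zpow_succ'[OF ww, of "- t"] by (simp add: mult.assoc)
    finally show ?case by simp
  qed
qed

section \<open>R-spans in an R-algebra\<close>

locale R_algebra =
  fixes \<phi> :: "'r::comm_ring_1 \<Rightarrow> 'a::ring_1"
  assumes alg: "is_R_algebra \<phi>"
begin

abbreviation sp :: "'a set \<Rightarrow> 'a set" where "sp \<equiv> rspan \<phi>"

lemma phi_1: "\<phi> 1 = 1"
  using alg unfolding is_R_algebra_def by blast

lemma phi_add: "\<phi> (a + b) = \<phi> a + \<phi> b"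
  using alg unfolding is_R_algebra_def by blast

lemma phi_mult: "\<phi> (a * b) = \<phi> a * \<phi> b"
  using alg unfolding is_R_algebra_def by blast

lemma phi_central: "\<phi> r * x = x * \<phi> r"
  using alg unfolding is_R_algebra_def by blast

lemma phi_central_left: "x * (\<phi> r * y) = \<phi> r * (x * y)"
  using phi_central by (metis mult.assoc)

lemma phi_0: "\<phi> 0 = 0"
  using phi_add[of 0 0] by simp

lemma phi_minus: "\<phi> (- a) = - \<phi> a"
  using phi_add[of "- a" a] phi_0 by (simp add: eq_neg_iff_add_eq_0)

lemma phi_diff: "\<phi> (a - b) = \<phi> a - \<phi> b"
  using phi_add[of a "- b"] phi_minus[of b] by simp

lemma span_base: "x \<in> S \<Longrightarrow> x \<in> sp S"
  unfolding rspan_def by (intro CollectI exI[of _ "{x}"] exI[of _ "\<lambda>_. 1"]) (simp add: phi_1)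

lemma span_0: "0 \<in> sp S"
  unfolding rspan_def by (intro CollectI exI[of _ "{}"]) simp

lemma span_add:
  assumes "x \<in> sp S" "y \<in> sp S" shows "x + y \<in> sp S"
proof -
  obtain F c where F: "finite F" "F \<subseteq> S" "x = (\<Sum>s\<in>F. \<phi> (c s) * s)"
    using assms(1) unfolding rspan_def by blast
  obtain G d where G: "finite G" "G \<subseteq> S" "y = (\<Sum>s\<in>G. \<phi> (d s) * s)"
    using assms(2) unfolding rspan_def by blast
  let ?c = "\<lambda>s. if s \<in> F then c s else 0" and ?d = "\<lambda>s. if s \<in> G then d s else 0"
  have fin: "finite (F \<union> G)" using F G by simp
  have "x = (\<Sum>s\<in>F \<union> G. \<phi> (?c s) * s)"
    unfolding F(3) by (rule sum.mono_neutral_cong_left[OF fin]) (auto simp: phi_0)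
  moreover have "y = (\<Sum>s\<in>F \<union> G. \<phi> (?d s) * s)"
    unfolding G(3) by (rule sum.mono_neutral_cong_left[OF fin]) (auto simp: phi_0)
  ultimately have "x + y = (\<Sum>s\<in>F \<union> G. \<phi> (?c s + ?d s) * s)"
    by (simp only: phi_add distrib_right sum.distrib)
  then show ?thesis unfolding rspan_def
    by (intro CollectI exI[of _ "F \<union> G"] exI[of _ "\<lambda>s. ?c s + ?d s"]) (use F G in simp)
qed

lemma span_smult:
  assumes "x \<in> sp S" shows "\<phi> r * x \<in> sp S"
proof -
  obtain F c where F: "finite F" "F \<subseteq> S" "x = (\<Sum>s\<in>F. \<phi> (c s) * s)"
    using assms unfolding rspan_def by blast
  have "\<phi> r * x = (\<Sum>s\<in>F. \<phi> (r * c s) * s)"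
    unfolding F(3) sum_distrib_left by (simp only: phi_mult mult.assoc)
  then show ?thesis unfolding rspan_def
    by (intro CollectI exI[of _ F] exI[of _ "\<lambda>s. r * c s"]) (use F in simp)
qed

lemma span_diff:
  assumes "x \<in> sp S" "y \<in> sp S" shows "x - y \<in> sp S"
  using span_add[OF assms(1) span_smult[OF assms(2), of "- 1"]] by (simp add: phi_minus phi_1)

lemma span_sum:
  assumes "finite F" "\<And>s. s \<in> F \<Longrightarrow> f s \<in> sp S" shows "sum f F \<in> sp S"
  using assms by (induction F rule: finite_induct) (auto intro: span_0 span_add)

lemma span_lmult:
  assumes "x \<in> sp S" "\<And>g. g \<in> S \<Longrightarrow> u * g \<in> sp T"
  shows "u * x \<in> sp T"
proof -
  obtain F c where F: "finite F" "F \<subseteq> S" "x = (\<Sum>s\<in>F. \<phi> (c s) * s)"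
    using assms unfolding rspan_def by blast
  have "u * x = (\<Sum>s\<in>F. \<phi> (c s) * (u * s))"
    unfolding F(3) sum_distrib_left by (simp only: phi_central_left)
  also have "\<dots> \<in> sp T" using F by (intro span_sum span_smult assms(2)) auto
  finally show ?thesis .
qed

lemma span_rmult:
  assumes "x \<in> sp S" "\<And>g. g \<in> S \<Longrightarrow> g * u \<in> sp T"
  shows "x * u \<in> sp T"
proof -
  obtain F c where F: "finite F" "F \<subseteq> S" "x = (\<Sum>s\<in>F. \<phi> (c s) * s)"
    using assms unfolding rspan_def by blast
  have "x * u = (\<Sum>s\<in>F. \<phi> (c s) * (s * u))"
    using F(3) by (simp add: sum_distrib_right mult.assoc)
  also have "\<dots> \<in> sp T" using F by (intro span_sum span_smult assms(2)) auto
  finally show ?thesis .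
qed

lemma span_sandwich:
  assumes "x \<in> sp S" "\<And>g. g \<in> S \<Longrightarrow> u * g * v \<in> sp T"
  shows "u * x * v \<in> sp T"
proof -
  have "x * v \<in> sp ((\<lambda>g. g * v) ` S)"
    by (rule span_rmult[OF assms(1)]) (auto intro: span_base)
  then have "u * (x * v) \<in> sp T"
    by (rule span_lmult) (use assms(2) in \<open>auto simp: mult.assoc\<close>)
  then show ?thesis by (simp add: mult.assoc)
qed

lemma span_mono: "x \<in> sp S \<Longrightarrow> S \<subseteq> T \<Longrightarrow> x \<in> sp T"
  using span_lmult[of x S 1 T] by (auto intro: span_base)

end

lemma Yp_Suc: "1 \<le> j \<Longrightarrow> Yp Y X (Suc j) = X j * Yp Y X j * X j"
  by (cases j) auto

text \<open>The setting of the theorem: elements of an R-algebra satisfying the defining relations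
  of the cyclotomic BMW algebra, with the parameter conditions actually needed.\<close>
locale cbmw = R_algebra \<phi>
  for \<phi> :: "'r::comm_ring_1 \<Rightarrow> 'a::ring_1" +
  fixes n k :: nat and qp qi lam lami :: 'r and qq A :: "nat \<Rightarrow> 'r"
    and Y Yinv :: 'a and X Xinv e :: "nat \<Rightarrow> 'a"
  assumes rels: "cbmw_rels n k \<phi> qp qi lam lami qq A Y Yinv X Xinv e"
    and lam_inverse: "lam * lami = 1"
    and lam_rel: "lam - lami = (qp - qi) * (1 - A 0)"
    and qq0_unit: "qq 0 dvd 1"
    and k_pos: "1 \<le> k"
begin

abbreviation "\<delta> \<equiv> \<phi> (qp - qi)"
abbreviation "lm \<equiv> \<phi> lam"
abbreviation "lmi \<equiv> \<phi> lami"
abbreviation "gen i \<equiv> 1 \<le> i \<and> i \<le> n - 1"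

lemmas rel = rels[unfolded cbmw_rels_def Let_def]

lemma Y_inverse: "Y * Yinv = 1" "Yinv * Y = 1"
  using rel by blast+
lemma X_inverse: "gen i \<Longrightarrow> X i * Xinv i = 1" "gen i \<Longrightarrow> Xinv i * X i = 1"
  using rel by blast+
lemma skein: "gen i \<Longrightarrow> X i - Xinv i = \<delta> * (1 - e i)"
  using rel by blast
lemma X_commute_far: "gen i \<Longrightarrow> gen j \<Longrightarrow> i + 2 \<le> j \<or> j + 2 \<le> i \<Longrightarrow> X i * X j = X j * X i"
  using rel by blast
lemma X_e_commute_far: "gen i \<Longrightarrow> gen j \<Longrightarrow> i + 2 \<le> j \<or> j + 2 \<le> i \<Longrightarrow> X i * e j = e j * X i"
  using rel by blast
lemma braid: "gen i \<Longrightarrow> gen (i + 1) \<Longrightarrow> X i * X (i + 1) * X i = X (i + 1) * X i * X (i + 1)"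
  using rel by blast
lemma X_e: "gen i \<Longrightarrow> X i * e i = lm * e i" "gen i \<Longrightarrow> e i * X i = lm * e i"
  using rel by blast+
lemma X_X_e: "gen i \<Longrightarrow> gen j \<Longrightarrow> j = i + 1 \<or> i = j + 1 \<Longrightarrow> X i * X j * e i = e j * e i"
  using rel by blast
lemma e_e_X_X: "gen i \<Longrightarrow> gen j \<Longrightarrow> j = i + 1 \<or> i = j + 1 \<Longrightarrow> e j * e i = e j * X i * X j"
  using rel by blast
lemma e_e_e: "gen i \<Longrightarrow> gen j \<Longrightarrow> j = i + 1 \<or> i = j + 1 \<Longrightarrow> e i * e j * e i = e i"
  using rel by blast
lemma e_square: "gen i \<Longrightarrow> e i * e i = \<phi> (A 0) * e i"
  using rel by blast
lemma Y_poly: "Y ^ k = (\<Sum>i<k. \<phi> (qq i) * Y ^ i)"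
  using rel by blast
lemma Y_X1_reflection: "gen 1 \<Longrightarrow> X 1 * Y * X 1 * Y = Y * X 1 * Y * X 1"
  using rel by blast
lemma Y_X_commute: "gen i \<Longrightarrow> 1 < i \<Longrightarrow> Y * X i = X i * Y"
  using rel by blast
lemma Y_e_commute: "gen i \<Longrightarrow> 1 < i \<Longrightarrow> Y * e i = e i * Y"
  using rel by blast
lemma Y_X1_Y_e1: "gen 1 \<Longrightarrow> Y * X 1 * Y * e 1 = lmi * e 1" "gen 1 \<Longrightarrow> e 1 * Y * X 1 * Y = lmi * e 1"
  using rel by blast+
lemma e1_Ypow_e1: "gen 1 \<Longrightarrow> m < k \<Longrightarrow> e 1 * Y ^ m * e 1 = \<phi> (A m) * e 1"
  using rel by blast

lemma lm_inverse: "lm * lmi = 1" "lmi * lm = 1"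
  using phi_mult[of lam lami] phi_mult[of lami lam] lam_inverse phi_1 by (simp_all add: mult.commute)

lemma X_cancel: "gen i \<Longrightarrow> X i * (Xinv i * z) = z" "gen i \<Longrightarrow> Xinv i * (X i * z) = z"
  using X_inverse by (simp_all add: mult.assoc[symmetric])

lemma Xinv_X_commute_far: "gen i \<Longrightarrow> gen j \<Longrightarrow> i + 2 \<le> j \<or> j + 2 \<le> i \<Longrightarrow> Xinv i * X j = X j * Xinv i"
  using inverse_commute[OF X_inverse X_commute_far] by blast

lemma Xinv_eq: "gen i \<Longrightarrow> Xinv i = X i - \<delta> + \<delta> * e i"
  using skein[of i] by (simp add: algebra_simps)

lemma Xinv_expand_left: "gen i \<Longrightarrow> Xinv i * w = X i * w - \<delta> * w + \<delta> * (e i * w)"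
  unfolding Xinv_eq by (simp add: algebra_simps)
lemma Xinv_expand_right: "gen i \<Longrightarrow> w * Xinv i = w * X i - \<delta> * w + \<delta> * (w * e i)"
  unfolding Xinv_eq by (simp add: algebra_simps phi_central_left phi_central[symmetric])
lemma X_expand_left: "gen i \<Longrightarrow> X i * w = Xinv i * w + \<delta> * w - \<delta> * (e i * w)"
  unfolding Xinv_eq by (simp add: algebra_simps)
lemma X_expand_right: "gen i \<Longrightarrow> w * X i = w * Xinv i + \<delta> * w - \<delta> * (w * e i)"
  unfolding Xinv_eq by (simp add: algebra_simps phi_central_left phi_central[symmetric])

lemma lm_rel: "lm - \<delta> * (1 - \<phi> (A 0)) = lmi"
proof -
  have "lm - lmi = \<delta> * (1 - \<phi> (A 0))"
    using arg_cong[OF lam_rel, of \<phi>] phi_diff phi_mult phi_1 by simp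
  then show ?thesis by (simp add: algebra_simps)
qed

text \<open>X_i^{-1} e_i = \<lambda>^{-1} e_i; this is where the relation between \<lambda>, \<delta> and A_0 enters.\<close>
lemma Xinv_e: assumes "gen i" shows "Xinv i * e i = lmi * e i" "e i * Xinv i = lmi * e i"
proof -
  have "Xinv i * e i = X i * e i - \<delta> * e i + \<delta> * (e i * e i)"
    using Xinv_expand_left[OF assms] .
  also have "\<dots> = (lm - \<delta> * (1 - \<phi> (A 0))) * e i"
    using X_e[OF assms] e_square[OF assms] by (simp add: algebra_simps)
  finally show "Xinv i * e i = lmi * e i" using lm_rel by simp
  have "e i * Xinv i = e i * X i - \<delta> * e i + \<delta> * (e i * e i)"
    using Xinv_expand_right[OF assms] .
  also have "\<dots> = (lm - \<delta> * (1 - \<phi> (A 0))) * e i"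
    using X_e[OF assms] e_square[OF assms] by (simp add: algebra_simps)
  finally show "e i * Xinv i = lmi * e i" using lm_rel by simp
qed

section \<open>The elements Y_i'\<close>

abbreviation "J j \<equiv> Yp Y X j"
abbreviation "Jinv j \<equiv> Yp Yinv Xinv j"
abbreviation "Jpow j t \<equiv> zpow (J j) (Jinv j) t"

lemma J_inverse: "1 \<le> j \<Longrightarrow> j \<le> n \<Longrightarrow> J j * Jinv j = 1 \<and> Jinv j * J j = 1"
proof (induction j rule: nat_induct_at_least)
  case base then show ?case using Y_inverse by simp
next
  case (Suc j)
  then have gj: "gen j" by auto
  have J1: "J (Suc j) = X j * J j * X j" "Jinv (Suc j) = Xinv j * Jinv j * Xinv j"
    using Yp_Suc[of j Y X] Yp_Suc[of j Yinv Xinv] Suc by auto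
  have "J j * (Jinv j * z) = z" "Jinv j * (J j * z) = z" for z
    using Suc by (simp_all add: mult.assoc[symmetric])
  then show ?case unfolding J1 using X_cancel[OF gj] X_inverse[OF gj] by (simp add: mult.assoc)
qed

lemmas J_Jinv = J_inverse[THEN conjunct1] and Jinv_J = J_inverse[THEN conjunct2]

lemma J_commute_higher:
  assumes "1 \<le> j" "j < m" "gen m" "w \<in> {X m, Xinv m, e m}"
  shows "J j * w = w * J j"
  using assms(1,2)
proof (induction j rule: nat_induct_at_least)
  case base
  have "Y * X m = X m * Y" "Y * e m = e m * Y"
    using Y_X_commute Y_e_commute assms(3) base by auto
  then show ?case using assms(4) inverse_commute[OF X_inverse[OF assms(3)], of Y] by auto
next
  case (Suc j)
  then have far: "gen j" "j + 2 \<le> m" using assms(3) by auto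
  have "X j * w = w * X j"
    using assms(4) X_commute_far[OF far(1) assms(3)] X_e_commute_far[OF far(1) assms(3)]
      Xinv_X_commute_far[OF assms(3) far(1)] far(2) by auto
  then show ?case using commute_sandwich[of "X j" w "J j"] Suc Yp_Suc[of j Y X] by simp
qed

lemma Jinv_commute_higher:
  assumes "1 \<le> j" "j < m" "gen m" "w \<in> {X m, Xinv m, e m}"
  shows "Jinv j * w = w * Jinv j"
  using inverse_commute[OF J_Jinv Jinv_J J_commute_higher[OF assms]] assms by auto

text \<open>Adjacent Y_j', Y_{j+1}' commute: the braid relation plus the reflection equation.\<close>
lemma J_commute_next: "1 \<le> j \<Longrightarrow> Suc j \<le> n \<Longrightarrow> J j * J (Suc j) = J (Suc j) * J j"
proof (induction j rule: nat_induct_at_least)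
  case base
  then have "X 1 * Y * X 1 * Y = Y * X 1 * Y * X 1" using Y_X1_reflection by auto
  then show ?case by (simp add: mult.assoc)
next
  case (Suc j)
  then have gj: "gen j" and gj1: "gen (Suc j)" by auto
  define a b Z where "a = X j" and "b = X (Suc j)" and "Z = J j"
  have J1: "J (Suc j) = a * Z * a" unfolding a_def Z_def using Suc Yp_Suc by auto
  have J2: "J (Suc (Suc j)) = b * (a * Z * a) * b" unfolding b_def using J1 Yp_Suc[of "Suc j"] by simp
  have br: "a * (b * (a * x)) = b * (a * (b * x))" for x
    using braid[OF gj] gj1 unfolding a_def b_def by (simp add: mult_eq_extend mult.assoc[symmetric])
  have Zb: "Z * (b * x) = b * (Z * x)" for x
    using J_commute_higher[of j "Suc j" "X (Suc j)"] Suc unfolding Z_def b_def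
    by (simp add: mult_eq_extend mult.assoc[symmetric])
  have ih: "Z * (a * (Z * (a * x))) = a * (Z * (a * (Z * x)))" for x
    using Suc J1 unfolding Z_def by (simp add: mult_eq_extend mult.assoc[symmetric])
  have "(a * Z * a) * (b * (a * Z * a) * b) = a * (Z * (a * (b * (a * (Z * (a * b))))))"
    by (simp add: mult.assoc)
  also have "\<dots> = a * (Z * (b * (a * (b * (Z * (a * b))))))" by (simp add: br)
  also have "\<dots> = a * (b * (Z * (a * (Z * (b * (a * b))))))" by (simp add: Zb)
  also have "\<dots> = a * (b * (Z * (a * (Z * (a * (b * a))))))" using br[of 1] by simp
  also have "\<dots> = a * (b * (a * (Z * (a * (Z * (b * a))))))" by (simp add: ih)
  also have "\<dots> = b * (a * (b * (Z * (a * (Z * (b * a))))))" by (simp add: br)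
  finally have L: "(a * Z * a) * (b * (a * Z * a) * b) = b * (a * (b * (Z * (a * (Z * (b * a))))))" .
  have "(b * (a * Z * a) * b) * (a * Z * a) = b * (a * (Z * (a * (b * (a * (Z * a))))))"
    by (simp add: mult.assoc)
  also have "\<dots> = b * (a * (Z * (b * (a * (b * (Z * a))))))" by (simp add: br)
  also have "\<dots> = b * (a * (b * (Z * (a * (Z * (b * a))))))" by (simp add: Zb)
  finally show ?case unfolding J1 J2 using L by simp
qed

text \<open>By induction on m, using that Y_j' commutes with X_m for m > j.\<close>
lemma J_commute_less:
  assumes "1 \<le> j" "j < m" "m \<le> n"
  shows "J j * J m = J m * J j"
proof -
  have "Suc j \<le> m \<Longrightarrow> m \<le> n \<Longrightarrow> J j * J m = J m * J j"
  proof (induction m rule: nat_induct_at_least)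
    case base then show ?case using J_commute_next assms by simp
  next
    case (Suc m)
    then have "X m * J j = J j * X m"
      using J_commute_higher[of j m "X m"] assms by auto
    moreover have "J (Suc m) = X m * J m * X m" using Suc assms Yp_Suc[of m Y X] by auto
    ultimately show ?case using commute_sandwich[of "X m" "J j" "J m"] Suc by simp
  qed
  then show ?thesis using assms by simp
qed

lemma J_commute:
  assumes "1 \<le> j" "j \<le> n" "1 \<le> m" "m \<le> n"
  shows "J j * J m = J m * J j" "Jinv j * J m = J m * Jinv j"
        "J j * Jinv m = Jinv m * J j" "Jinv j * Jinv m = Jinv m * Jinv j"
proof -
  show c: "J j * J m = J m * J j"
    using J_commute_less[of j m] J_commute_less[of m j] assms by (cases j m rule: linorder_cases) auto
  have I: "J j * Jinv j = 1" "Jinv j * J j = 1" "J m * Jinv m = 1" "Jinv m * J m = 1"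
    using J_inverse assms by auto
  show c2: "Jinv j * J m = J m * Jinv j" using inverse_commute[OF I(1,2) c] .
  show "J j * Jinv m = Jinv m * J j" using inverse_commute[OF I(3,4) c[symmetric]] by simp
  show "Jinv j * Jinv m = Jinv m * Jinv j" using inverse_commute[OF I(3,4) c2[symmetric]] by simp
qed

text \<open>The key identity Y_i' Y_{i+1}' e_i = e_i, proved by induction on i.  At i = 1 it is
  the relation Y X_1 Y e_1 = \<lambda>^{-1} e_1; the step uses the braid and tangle relations.\<close>
lemma J_J_e: "1 \<le> i \<Longrightarrow> i \<le> n - 1 \<Longrightarrow> J i * J (Suc i) * e i = e i"
proof (induction i rule: nat_induct_at_least)
  case base
  then have g1: "gen 1" by auto
  have "J 1 * J (Suc 1) * e 1 = Y * X 1 * Y * (X 1 * e 1)" by (simp add: mult.assoc)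
  also have "\<dots> = lm * (Y * X 1 * Y * e 1)" using X_e[OF g1] by (simp add: phi_central_left)
  also have "\<dots> = e 1" using Y_X1_Y_e1[OF g1] lm_inverse by (simp add: mult.assoc[symmetric])
  finally show ?case .
next
  case (Suc i)
  then have gi: "gen i" and gi1: "gen (Suc i)" by auto
  define a b b' Z f g where "a = X i" and "b = X (Suc i)" and "b' = Xinv (Suc i)"
    and "Z = J i" and "f = e (Suc i)" and "g = e i"
  have J1: "J (Suc i) = a * Z * a" unfolding a_def Z_def using Suc Yp_Suc by auto
  have J2: "J (Suc (Suc i)) = b * (a * Z * a) * b" unfolding b_def using J1 Yp_Suc[of "Suc i"] by simp
  have ih: "Z * (a * Z * a) * g = g" using Suc J1 unfolding Z_def g_def by auto
  have bf: "b * f = lm * f" using X_e[OF gi1] unfolding b_def f_def by auto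
  have bb': "b * (b' * x) = x" "b' * (b * x) = x" for x using X_cancel[OF gi1] unfolding b_def b'_def by auto
  have bab: "a * (b * (a * x)) = b * (a * (b * x))" for x
    using braid[OF gi] gi1 unfolding a_def b_def by (simp add: mult_eq_extend mult.assoc[symmetric])
  have Zb: "Z * (b * x) = b * (Z * x)" "Z * (b' * x) = b' * (Z * x)" for x
    using J_commute_higher[of i "Suc i" "X (Suc i)"] J_commute_higher[of i "Suc i" "Xinv (Suc i)"] Suc
    unfolding Z_def b_def b'_def by (simp_all add: mult_eq_extend mult.assoc[symmetric])
  have af: "a * f = b' * (g * f)"
    using arg_cong[OF X_X_e[OF gi1 gi], of "\<lambda>x. b' * x"] bb'(2) unfolding a_def b_def f_def g_def
    by (simp add: mult.assoc)
  have abg: "a * (b * g) = f * g" using X_X_e[OF gi gi1] unfolding a_def b_def f_def g_def by (simp add: mult.assoc)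
  have fgf: "f * (g * f) = f" using e_e_e[OF gi1 gi] unfolding f_def g_def by (simp add: mult.assoc)
  have ZaZg: "Z * (a * (Z * g)) = lmi * g"
  proof -
    have "g = Z * (a * (Z * (a * g)))" using ih by (simp add: mult.assoc)
    also have "\<dots> = lm * (Z * (a * (Z * g)))" using X_e[OF gi] unfolding a_def g_def by (simp add: phi_central_left)
    finally have "lmi * g = lmi * (lm * (Z * (a * (Z * g))))" by simp
    then show ?thesis using lm_inverse by (simp add: mult.assoc[symmetric])
  qed
  have "(a * Z * a) * (b * (a * Z * a) * b) * f = a * (Z * (a * (b * (a * (Z * (a * (b * f)))))))"
    by (simp add: mult.assoc)
  also have "\<dots> = lm * (a * (Z * (a * (b * (a * (Z * (a * f)))))))" using bf by (simp add: phi_central_left)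
  also have "\<dots> = lm * (a * (Z * (a * (b * (a * (b' * (Z * (g * f))))))))" using af Zb by simp
  also have "\<dots> = lm * (a * (Z * (b * (a * (Z * (g * f))))))" using bab bb' by simp
  also have "\<dots> = lm * (a * (b * (Z * (a * (Z * (g * f))))))" using Zb by simp
  also have "\<dots> = lm * (a * (b * (lmi * g * f)))" using ZaZg by (simp add: mult.assoc[symmetric])
  also have "\<dots> = lm * (lmi * (a * (b * (g * f))))"
  proof -
    have "a * (b * (lmi * g * f)) = lmi * (a * (b * (g * f)))" by (simp add: phi_central_left mult.assoc)
    then show ?thesis by simp
  qed
  also have "\<dots> = f" using lm_inverse abg fgf by (simp add: mult.assoc[symmetric])
  finally show ?case unfolding J1 J2 f_def .
qed

lemma e_J_J: "1 \<le> i \<Longrightarrow> i \<le> n - 1 \<Longrightarrow> e i * J i * J (Suc i) = e i"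
proof (induction i rule: nat_induct_at_least)
  case base
  then have g1: "gen 1" by auto
  have "e 1 * J 1 * J (Suc 1) = (e 1 * Y * X 1 * Y) * X 1" by (simp add: mult.assoc)
  also have "\<dots> = lmi * (lm * e 1)" using Y_X1_Y_e1[OF g1] X_e[OF g1] by (simp add: mult.assoc)
  also have "\<dots> = e 1" using lm_inverse by (simp add: mult.assoc[symmetric])
  finally show ?case .
next
  case (Suc i)
  then have gi: "gen i" and gi1: "gen (Suc i)" by auto
  define a b b' Z f g where "a = X i" and "b = X (Suc i)" and "b' = Xinv (Suc i)"
    and "Z = J i" and "f = e (Suc i)" and "g = e i"
  have J1: "J (Suc i) = a * Z * a" unfolding a_def Z_def using Suc Yp_Suc by auto
  have J2: "J (Suc (Suc i)) = b * (a * Z * a) * b" unfolding b_def using J1 Yp_Suc[of "Suc i"] by simp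
  have ih: "g * (Z * (a * (Z * (a * x)))) = g * x" for x
    using Suc J1 unfolding Z_def g_def by (simp add: mult_eq_extend mult.assoc[symmetric])
  have bb': "b' * (b * x) = x" for x using X_cancel[OF gi1] unfolding b_def b'_def by auto
  have bab: "a * (b * (a * x)) = b * (a * (b * x))" for x
    using braid[OF gi] gi1 unfolding a_def b_def by (simp add: mult_eq_extend mult.assoc[symmetric])
  have Zb: "Z * (b * x) = b * (Z * x)" "Z * (b' * x) = b' * (Z * x)" for x
    using J_commute_higher[of i "Suc i" "X (Suc i)"] J_commute_higher[of i "Suc i" "Xinv (Suc i)"] Suc
    unfolding Z_def b_def b'_def by (simp_all add: mult_eq_extend mult.assoc[symmetric])
  have fa: "f * a = f * (g * b')"
  proof -
    have "f * g = f * (a * b)"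
      using e_e_X_X[OF gi gi1] unfolding a_def b_def f_def g_def by (simp add: mult.assoc)
    then have "f * (g * b') = f * (a * (b * b'))" by (simp add: mult.assoc[symmetric])
    then show ?thesis using X_inverse[OF gi1] unfolding b_def b'_def by simp
  qed
  have gba: "g * (b * a) = g * f" using e_e_X_X[OF gi1 gi] unfolding a_def b_def f_def g_def by (simp add: mult.assoc)
  have fgf: "f * (g * f) = f" using e_e_e[OF gi1 gi] unfolding f_def g_def by (simp add: mult.assoc)
  have "f * (a * Z * a) * (b * (a * Z * a) * b) = f * (a * (Z * (a * (b * (a * (Z * (a * b)))))))"
    by (simp add: mult.assoc)
  also have "\<dots> = f * (g * (b' * (Z * (a * (b * (a * (Z * (a * b))))))))"
    using fa by (simp add: mult.assoc[symmetric])
  also have "\<dots> = f * (g * (Z * (b' * (a * (b * (a * (Z * (a * b))))))))" using Zb by simp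
  also have "\<dots> = f * (g * (Z * (a * (b * (Z * (a * b))))))" using bab bb' by simp
  also have "\<dots> = f * (g * (Z * (a * (Z * (b * (a * b))))))" using Zb by simp
  also have "\<dots> = f * (g * (Z * (a * (Z * (a * (b * a))))))" using bab[of 1] by simp
  also have "\<dots> = f" using ih gba fgf by simp
  finally show ?case unfolding J1 J2 f_def .
qed

lemma J_next_e:
  assumes "gen i"
  shows "J (Suc i) * e i = Jinv i * e i" "e i * J (Suc i) = e i * Jinv i"
        "Jinv (Suc i) * e i = J i * e i" "e i * Jinv (Suc i) = e i * J i"
proof -
  have i: "1 \<le> i" "i \<le> n" "1 \<le> Suc i" "Suc i \<le> n" using assms by auto
  have L: "J i * J (Suc i) * e i = e i" and R: "e i * J i * J (Suc i) = e i"
    using J_J_e e_J_J assms by auto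
  have I: "Jinv i * J i = 1" "J i * Jinv i = 1" "Jinv (Suc i) * J (Suc i) = 1" "J (Suc i) * Jinv (Suc i) = 1"
    using J_inverse i by auto
  have C: "J i * J (Suc i) = J (Suc i) * J i" using J_commute i by auto
  show "J (Suc i) * e i = Jinv i * e i"
    using arg_cong[OF L, of "\<lambda>x. Jinv i * x"] I by (simp add: mult.assoc[symmetric])
  show "e i * J (Suc i) = e i * Jinv i"
    using arg_cong[OF R, of "\<lambda>x. x * Jinv i"] I C by (simp add: mult.assoc)
  show "Jinv (Suc i) * e i = J i * e i"
    using arg_cong[OF L, of "\<lambda>x. Jinv (Suc i) * x"] I C by (simp add: mult.assoc[symmetric])
  show "e i * Jinv (Suc i) = e i * J i"
    using arg_cong[OF R, of "\<lambda>x. x * Jinv (Suc i)"] I by (simp add: mult.assoc)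
qed

lemma Jpow_next_e:
  assumes "gen i"
  shows "Jpow (Suc i) t * e i = Jpow i (- t) * e i" "e i * Jpow (Suc i) t = e i * Jpow i (- t)"
proof -
  have i: "1 \<le> i" "i \<le> n" "1 \<le> Suc i" "Suc i \<le> n" using assms by auto
  have I: "J i * Jinv i = 1" "Jinv i * J i = 1" "J (Suc i) * Jinv (Suc i) = 1" "Jinv (Suc i) * J (Suc i) = 1"
    using J_inverse i by auto
  have C: "J (Suc i) * J i = J i * J (Suc i)" using J_commute i by auto
  show "Jpow (Suc i) t * e i = Jpow i (- t) * e i"
    using zpow_transfer_left[OF I(3,4,1,2) C] J_next_e[OF assms] by auto
  show "e i * Jpow (Suc i) t = e i * Jpow i (- t)"
    using zpow_transfer_right[OF I(3,4,1,2) C] J_next_e[OF assms] by auto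
qed

lemma X_J:
  assumes "gen i"
  shows "X i * J i = J (Suc i) * Xinv i" "Xinv i * Jinv i = Jinv (Suc i) * X i"
        "J i * X i = Xinv i * J (Suc i)" "Jinv i * Xinv i = X i * Jinv (Suc i)"
proof -
  have J1: "J (Suc i) = X i * J i * X i" "Jinv (Suc i) = Xinv i * Jinv i * Xinv i"
    using Yp_Suc[of i Y X] Yp_Suc[of i Yinv Xinv] assms by auto
  show "X i * J i = J (Suc i) * Xinv i" "Xinv i * Jinv i = Jinv (Suc i) * X i"
    unfolding J1 using X_inverse[OF assms] by (simp_all add: mult.assoc)
  show "J i * X i = Xinv i * J (Suc i)" "Jinv i * Xinv i = X i * Jinv (Suc i)"
    unfolding J1 using X_cancel[OF assms] by (simp_all add: mult.assoc)
qed

abbreviation "mon s m \<equiv> Ymon Y Yinv X Xinv s m"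

lemma mon_0 [simp]: "mon s 0 = 1"
  by (simp add: Ymon_def)

lemma mon_Suc: "mon s (Suc m) = mon s m * Jpow (Suc m) (s (Suc m))"
  by (simp add: Ymon_def)

lemma mon_cong: "(\<And>j. 1 \<le> j \<Longrightarrow> j \<le> m \<Longrightarrow> s j = s' j) \<Longrightarrow> mon s m = mon s' m"
  by (induction m) (simp_all add: mon_Suc)

lemma mon_zero: "mon (\<lambda>_. 0) m = 1"
  by (induction m) (simp_all add: mon_Suc)

lemma mon_split: "gen i \<Longrightarrow> mon s i = mon s (i - 1) * Jpow i (s i)"
  using mon_Suc[of s "i - 1"] by simp

lemma mon_update_above: "m < i \<Longrightarrow> mon (s(i := x)) m = mon s m"
  by (rule mon_cong) auto

lemma mon_extend: "gen i \<Longrightarrow> mon s (i - 1) * Jpow i x = mon (s(i := x)) i"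
  using mon_split[of i "s(i := x)"] mon_update_above[of "i - 1" i s x] by simp

lemma Jpow_add: "1 \<le> j \<Longrightarrow> j \<le> n \<Longrightarrow> Jpow j a * Jpow j b = Jpow j (a + b)"
  using zpow_add[OF J_Jinv Jinv_J] by auto

lemma J_commute_Jpow:
  assumes "1 \<le> j" "j \<le> n" "1 \<le> m" "m \<le> n"
  shows "J m * Jpow j t = Jpow j t * J m" "Jinv m * Jpow j t = Jpow j t * Jinv m"
  using zpow_commute[of "J j" "J m" "Jinv j" t] zpow_commute[of "J j" "Jinv m" "Jinv j" t]
    J_commute[OF assms] by simp_all

lemma Jpow_commute:
  assumes "1 \<le> j" "j \<le> n" "1 \<le> m" "m \<le> n"
  shows "Jpow j a * Jpow m b = Jpow m b * Jpow j a"
  using zpow_commute[of "J j" "Jpow m b" "Jinv j"] J_commute_Jpow[OF assms(3,4,1,2)] by simp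

lemma mon_commute:
  assumes "\<And>j. 1 \<le> j \<Longrightarrow> j \<le> m \<Longrightarrow> J j * w = w * J j \<and> Jinv j * w = w * Jinv j"
  shows "mon s m * w = w * mon s m"
  using assms
proof (induction m)
  case (Suc m)
  have P: "Jpow (Suc m) t * w = w * Jpow (Suc m) t" for t
    using Suc.prems[of "Suc m"] zpow_commute by auto
  have M: "mon s m * w = w * mon s m" using Suc by simp
  have "mon s (Suc m) * w = mon s m * (Jpow (Suc m) (s (Suc m)) * w)" by (simp add: mon_Suc mult.assoc)
  also have "\<dots> = (mon s m * w) * Jpow (Suc m) (s (Suc m))" by (simp add: P mult.assoc)
  finally show ?case by (simp add: M mon_Suc mult.assoc)
qed simp

lemma mon_commute_Jpow: "m \<le> n \<Longrightarrow> 1 \<le> j \<Longrightarrow> j \<le> n \<Longrightarrow> mon s m * Jpow j t = Jpow j t * mon s m"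
  by (rule mon_commute) (simp add: J_commute_Jpow)

lemma mon_commute_higher:
  assumes "gen i" "m < i" "w \<in> {X i, Xinv i, e i}"
  shows "mon s m * w = w * mon s m"
  using J_commute_higher[OF _ _ assms(1,3)] Jinv_commute_higher[OF _ _ assms(1,3)] assms(2)
  by (intro mon_commute) auto

lemma Jpow_commute_higher:
  assumes "gen i" "1 \<le> j" "j < i" "w \<in> {X i, Xinv i, e i}"
  shows "Jpow j t * w = w * Jpow j t"
  using zpow_commute J_commute_higher[OF assms(2,3,1,4)] Jinv_commute_higher[OF assms(2,3,1,4)] by blast

lemma mon_mult_Jpow: "1 \<le> j \<Longrightarrow> j \<le> m \<Longrightarrow> m \<le> n \<Longrightarrow> mon s m * Jpow j t = mon (s(j := s j + t)) m"
proof (induction m)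
  case (Suc m)
  show ?case
  proof (cases "j = Suc m")
    case True
    have "mon s (Suc m) * Jpow j t = mon s m * Jpow j (s j + t)"
      unfolding mon_Suc True using Jpow_add Suc.prems True by (simp add: mult.assoc)
    then show ?thesis unfolding mon_Suc using True mon_update_above[of m j s] by simp
  next
    case False
    then have jm: "j \<le> m" using Suc.prems by simp
    have "mon s (Suc m) * Jpow j t = (mon s m * Jpow j t) * Jpow (Suc m) (s (Suc m))"
      unfolding mon_Suc using Jpow_commute[of "Suc m" j] Suc.prems by (simp add: mult.assoc)
    also have "\<dots> = mon (s(j := s j + t)) m * Jpow (Suc m) (s (Suc m))"
      by (simp only: Suc.IH[OF Suc.prems(1) jm Suc_leD[OF Suc.prems(3)]])
    also have "\<dots> = mon (s(j := s j + t)) (Suc m)" unfolding mon_Suc using False by simp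
    finally show ?thesis .
  qed
qed simp

lemma mon_mult: "m \<le> n \<Longrightarrow> mon s m * mon s' m = mon (\<lambda>j. s j + s' j) m"
proof (induction m)
  case (Suc m)
  have "mon s (Suc m) * mon s' (Suc m)
      = (mon s m * mon s' m) * (Jpow (Suc m) (s (Suc m)) * Jpow (Suc m) (s' (Suc m)))"
    unfolding mon_Suc using mult_eq_extend[OF mon_commute_Jpow[of m "Suc m" s' "s (Suc m)", symmetric]] Suc.prems
    by (simp add: mult.assoc)
  then show ?case unfolding mon_Suc using Suc Jpow_add[of "Suc m"] by simp
qed simp

lemma Jpow_mult_mon: "1 \<le> j \<Longrightarrow> j \<le> m \<Longrightarrow> m \<le> n \<Longrightarrow> Jpow j t * mon s m = mon (s(j := s j + t)) m"
  using mon_commute_Jpow[of m j s t] mon_mult_Jpow[of j m s t] by simp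

text \<open>The three families whose spans appear in parts (I), (II) and (III).\<close>
definition low_mon_e :: "nat \<Rightarrow> 'a set" where
  "low_mon_e i = {mon s (i - 1) * e i | s. True}"
definition mon_e :: "nat \<Rightarrow> int \<Rightarrow> 'a set" where
  "mon_e i N = {mon s i * e i | s. \<bar>s i\<bar> \<le> N}"
definition e_mon :: "nat \<Rightarrow> int \<Rightarrow> 'a set" where
  "e_mon i N = {e i * mon s i | s. \<bar>s i\<bar> \<le> N}"

lemma low_mon_e_subset_mon_e: "gen i \<Longrightarrow> 0 \<le> N \<Longrightarrow> low_mon_e i \<subseteq> mon_e i N"
  unfolding low_mon_e_def mon_e_def using mon_extend[of i _ 0] by fastforce

lemma low_mon_e_subset_e_mon: assumes "gen i" "0 \<le> N" shows "low_mon_e i \<subseteq> e_mon i N"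
proof
  fix x assume "x \<in> low_mon_e i"
  then obtain s where x: "x = mon s (i - 1) * e i" unfolding low_mon_e_def by auto
  then have "x = e i * mon (s(i := 0)) i"
    using mon_commute_higher[OF assms(1), of "i - 1" "e i" s] mon_extend[OF assms(1), of s 0] assms by simp
  then show "x \<in> e_mon i N" unfolding e_mon_def using assms(2) by fastforce
qed

lemma mon_single: "gen i \<Longrightarrow> mon ((\<lambda>_. 0)(i := t)) i = Jpow i t"
  using mon_extend[of i "\<lambda>_. 0" t] mon_zero by simp

lemma Jpow_e_in_mon_e: "gen i \<Longrightarrow> \<bar>t\<bar> \<le> N \<Longrightarrow> Jpow i t * e i \<in> mon_e i N"
  unfolding mon_e_def using mon_single[of i t] by (auto intro!: exI[of _ "(\<lambda>_. 0)(i := t)"])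

lemma e_Jpow_in_e_mon: "gen i \<Longrightarrow> \<bar>t\<bar> \<le> N \<Longrightarrow> e i * Jpow i t \<in> e_mon i N"
  unfolding e_mon_def using mon_single[of i t] by (auto intro!: exI[of _ "(\<lambda>_. 0)(i := t)"])

lemma mon_commute_J_next:
  assumes "gen i"
  shows "mon s i * J (Suc i) = J (Suc i) * mon s i" "mon s i * Jinv (Suc i) = Jinv (Suc i) * mon s i"
  using mon_commute_Jpow[of i "Suc i" s 1] mon_commute_Jpow[of i "Suc i" s "-1"] assms by auto

text \<open>Since Y_{i+1}'^{\<plusminus>1} acts on e_i as Y_i'^{\<mp>1}, multiplying by it raises the bound on
  the exponent of Y_i' by one.\<close>
lemma J_next_mon_e:
  assumes "gen i" "x \<in> sp (mon_e i N)"
  shows "J (Suc i) * x \<in> sp (mon_e i (N + 1))" "Jinv (Suc i) * x \<in> sp (mon_e i (N + 1))"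
proof -
  have step: "u * g \<in> sp (mon_e i (N + 1))"
    if u: "u * e i = Jpow i t * e i" "\<And>s. mon s i * u = u * mon s i" "\<bar>t\<bar> = 1"
      and g: "g \<in> mon_e i N" for u g t
  proof -
    obtain s where s: "g = mon s i * e i" "\<bar>s i\<bar> \<le> N" using g unfolding mon_e_def by auto
    have "u * g = mon s i * Jpow i t * e i" using u(1,2) s(1) by (metis mult.assoc)
    also have "\<dots> = mon (s(i := s i + t)) i * e i" using mon_mult_Jpow[of i i s t] assms by auto
    finally show ?thesis unfolding mon_e_def using s(2) u(3) by (intro span_base) fastforce
  qed
  show "J (Suc i) * x \<in> sp (mon_e i (N + 1))"
    using step[of "J (Suc i)" "- 1"] J_next_e(1)[OF assms(1)] mon_commute_J_next[OF assms(1)]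
    by (intro span_lmult[OF assms(2)]) auto
  show "Jinv (Suc i) * x \<in> sp (mon_e i (N + 1))"
    using step[of "Jinv (Suc i)" 1] J_next_e(3)[OF assms(1)] mon_commute_J_next[OF assms(1)]
    by (intro span_lmult[OF assms(2)]) auto
qed

lemma e_mon_J_next:
  assumes "gen i" "x \<in> sp (e_mon i N)"
  shows "x * J (Suc i) \<in> sp (e_mon i (N + 1))" "x * Jinv (Suc i) \<in> sp (e_mon i (N + 1))"
proof -
  have step: "g * u \<in> sp (e_mon i (N + 1))"
    if u: "e i * u = e i * Jpow i t" "\<And>s. mon s i * u = u * mon s i" "\<bar>t\<bar> = 1"
      and g: "g \<in> e_mon i N" for u g t
  proof -
    obtain s where s: "g = e i * mon s i" "\<bar>s i\<bar> \<le> N" using g unfolding e_mon_def by auto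
    have "g * u = e i * Jpow i t * mon s i" using u(1,2) s(1) by (metis mult.assoc)
    also have "\<dots> = e i * (mon s i * Jpow i t)"
      using mon_commute_Jpow[of i i s t] assms by (auto simp: mult.assoc)
    also have "\<dots> = e i * mon (s(i := s i + t)) i" using mon_mult_Jpow[of i i s t] assms by auto
    finally show ?thesis unfolding e_mon_def using s(2) u(3) by (intro span_base) fastforce
  qed
  show "x * J (Suc i) \<in> sp (e_mon i (N + 1))"
    using step[of "J (Suc i)" "- 1"] J_next_e(2)[OF assms(1)] mon_commute_J_next[OF assms(1)]
    by (intro span_rmult[OF assms(2)]) auto
  show "x * Jinv (Suc i) \<in> sp (e_mon i (N + 1))"
    using step[of "Jinv (Suc i)" 1] J_next_e(4)[OF assms(1)] mon_commute_J_next[OF assms(1)]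
    by (intro span_rmult[OF assms(2)]) auto
qed

section \<open>Parts (II) and (III) from part (I)\<close>

text \<open>Induction on |p|: moving X_i past Y_i' turns it into Y_{i+1}' X_i^{-1}, and the skein
  relation replaces X_i^{-1} by X_i up to terms of the form (I).\<close>
lemma X_Jpow_e:
  assumes gi: "gen i"
  shows "(\<forall>t. \<bar>t\<bar> \<le> \<bar>p\<bar> \<longrightarrow> e i * Jpow i t * e i \<in> sp (low_mon_e i))
           \<Longrightarrow> X i * Jpow i p * e i \<in> sp (mon_e i \<bar>p\<bar>)"
proof (induction p rule: int_induct_from_zero)
  case zero
  have "e i \<in> mon_e i 0" using Jpow_e_in_mon_e[OF gi, of 0 0] by simp
  then show ?case using X_e[OF gi] span_smult[OF span_base] by simp
next
  case (up p)
  have I: "1 \<le> i" "i \<le> n" using gi by auto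
  have IH: "X i * Jpow i p * e i \<in> sp (mon_e i \<bar>p\<bar>)" using up by auto
  have "e i * Jpow i p * e i \<in> sp (low_mon_e i)" using up by auto
  then have E: "e i * Jpow i p * e i \<in> sp (mon_e i \<bar>p\<bar>)"
    using span_mono low_mon_e_subset_mon_e[OF gi] by auto
  have "X i * Jpow i (p + 1) * e i = J (Suc i) * (Xinv i * (Jpow i p * e i))"
    unfolding zpow_succ[OF J_Jinv[OF I] Jinv_J[OF I]]
    using mult_eq_extend[OF X_J(1)[OF gi]] by (simp add: mult.assoc)
  also have "\<dots> = J (Suc i) * (X i * Jpow i p * e i) - \<delta> * (J (Suc i) * (Jpow i p * e i))
      + \<delta> * (J (Suc i) * (e i * Jpow i p * e i))"
    unfolding Xinv_expand_left[OF gi] by (simp add: algebra_simps phi_central_left)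
  finally have eq: "X i * Jpow i (p + 1) * e i = \<dots>" .
  have "J (Suc i) * Jpow i p = Jpow i p * J (Suc i)" using J_commute_Jpow(1)[of i "Suc i" p] gi by auto
  then have "J (Suc i) * (Jpow i p * e i) = Jpow i p * (J (Suc i) * e i)"
    by (simp add: mult.assoc[symmetric])
  also have "\<dots> = Jpow i p * (Jinv i * e i)" using J_next_e(1)[OF gi] by simp
  also have "\<dots> = Jpow i (p - 1) * e i"
    using zpow_pred'[OF J_Jinv[OF I] Jinv_J[OF I], of p] by (simp add: mult.assoc)
  finally have B: "J (Suc i) * (Jpow i p * e i) \<in> sp (mon_e i (\<bar>p\<bar> + 1))"
    using Jpow_e_in_mon_e[OF gi, of "p - 1"] by (auto intro: span_base)
  have "X i * Jpow i (p + 1) * e i \<in> sp (mon_e i (\<bar>p\<bar> + 1))"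
    unfolding eq by (intro span_add span_diff span_smult J_next_mon_e(1)[OF gi IH] B J_next_mon_e(1)[OF gi E])
  moreover have "\<bar>p + 1\<bar> = \<bar>p\<bar> + 1" using up.hyps by simp
  ultimately show ?case by simp
next
  case (down p)
  have I: "1 \<le> i" "i \<le> n" using gi by auto
  have IH: "X i * Jpow i p * e i \<in> sp (mon_e i \<bar>p\<bar>)" using down by auto
  have "X i * Jpow i (p - 1) * e i = Xinv i * (Jpow i (p - 1) * e i) + \<delta> * (Jpow i (p - 1) * e i)
      - \<delta> * (e i * Jpow i (p - 1) * e i)"
    unfolding X_expand_left[OF gi, of "Jpow i (p - 1) * e i"] mult.assoc by simp
  also have "Xinv i * (Jpow i (p - 1) * e i) = Jinv (Suc i) * (X i * Jpow i p * e i)"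
    unfolding zpow_pred[OF J_Jinv[OF I] Jinv_J[OF I]]
    using mult_eq_extend[OF X_J(2)[OF gi]] by (simp add: mult.assoc)
  also have "Jinv (Suc i) * (X i * Jpow i p * e i) + \<delta> * (Jpow i (p - 1) * e i)
      - \<delta> * (e i * Jpow i (p - 1) * e i) \<in> sp (mon_e i (\<bar>p\<bar> + 1))"
    using down J_next_mon_e(2)[OF gi IH] Jpow_e_in_mon_e[OF gi, of "p - 1"]
      span_mono[OF _ low_mon_e_subset_mon_e[OF gi]]
    by (intro span_add span_diff span_smult) (auto intro: span_base)
  finally show ?case using down.hyps by simp
qed

lemma e_Jpow_X:
  assumes gi: "gen i"
  shows "(\<forall>t. \<bar>t\<bar> \<le> \<bar>p\<bar> \<longrightarrow> e i * Jpow i t * e i \<in> sp (low_mon_e i))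
           \<Longrightarrow> e i * Jpow i p * X i \<in> sp (e_mon i \<bar>p\<bar>)"
proof (induction p rule: int_induct_from_zero)
  case zero
  have "e i \<in> e_mon i 0" using e_Jpow_in_e_mon[OF gi, of 0 0] by simp
  then show ?case using X_e[OF gi] span_smult[OF span_base] by simp
next
  case (up p)
  have I: "1 \<le> i" "i \<le> n" using gi by auto
  have IH: "e i * Jpow i p * X i \<in> sp (e_mon i \<bar>p\<bar>)" using up by auto
  have "e i * Jpow i p * e i \<in> sp (low_mon_e i)" using up by auto
  then have E: "e i * Jpow i p * e i \<in> sp (e_mon i \<bar>p\<bar>)"
    using span_mono low_mon_e_subset_e_mon[OF gi] by auto
  have "e i * Jpow i (p + 1) * X i = ((e i * Jpow i p) * Xinv i) * J (Suc i)"
    unfolding zpow_succ'[OF J_Jinv[OF I] Jinv_J[OF I]] using X_J(3)[OF gi] by (simp add: mult.assoc)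
  also have "\<dots> = (e i * Jpow i p * X i) * J (Suc i) - \<delta> * ((e i * Jpow i p) * J (Suc i))
      + \<delta> * ((e i * Jpow i p * e i) * J (Suc i))"
    unfolding Xinv_expand_right[OF gi] by (simp add: algebra_simps phi_central_left)
  finally have eq: "e i * Jpow i (p + 1) * X i = \<dots>" .
  have "J (Suc i) * Jpow i p = Jpow i p * J (Suc i)" using J_commute_Jpow(1)[of i "Suc i" p] gi by auto
  then have "(e i * Jpow i p) * J (Suc i) = (e i * J (Suc i)) * Jpow i p"
    by (simp add: mult.assoc)
  also have "\<dots> = (e i * Jinv i) * Jpow i p" using J_next_e(2)[OF gi] by simp
  also have "\<dots> = e i * Jpow i (p - 1)"
    using zpow_pred[OF J_Jinv[OF I] Jinv_J[OF I], of p] by (simp add: mult.assoc)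
  finally have B: "(e i * Jpow i p) * J (Suc i) \<in> sp (e_mon i (\<bar>p\<bar> + 1))"
    using e_Jpow_in_e_mon[OF gi, of "p - 1"] by (auto intro: span_base)
  have "e i * Jpow i (p + 1) * X i \<in> sp (e_mon i (\<bar>p\<bar> + 1))"
    unfolding eq by (intro span_add span_diff span_smult e_mon_J_next(1)[OF gi IH] B e_mon_J_next(1)[OF gi E])
  moreover have "\<bar>p + 1\<bar> = \<bar>p\<bar> + 1" using up.hyps by simp
  ultimately show ?case by simp
next
  case (down p)
  have I: "1 \<le> i" "i \<le> n" using gi by auto
  have IH: "e i * Jpow i p * X i \<in> sp (e_mon i \<bar>p\<bar>)" using down by auto
  have "e i * Jpow i (p - 1) * X i = (e i * Jpow i (p - 1)) * Xinv i + \<delta> * (e i * Jpow i (p - 1))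
      - \<delta> * (e i * Jpow i (p - 1) * e i)"
    unfolding X_expand_right[OF gi, of "e i * Jpow i (p - 1)"] by (simp add: mult.assoc)
  also have "(e i * Jpow i (p - 1)) * Xinv i = (e i * Jpow i p * X i) * Jinv (Suc i)"
    unfolding zpow_pred'[OF J_Jinv[OF I] Jinv_J[OF I]] using X_J(4)[OF gi] by (simp add: mult.assoc)
  also have "(e i * Jpow i p * X i) * Jinv (Suc i) + \<delta> * (e i * Jpow i (p - 1))
      - \<delta> * (e i * Jpow i (p - 1) * e i) \<in> sp (e_mon i (\<bar>p\<bar> + 1))"
    using down e_mon_J_next(2)[OF gi IH] e_Jpow_in_e_mon[OF gi, of "p - 1"]
      span_mono[OF _ low_mon_e_subset_e_mon[OF gi]]
    by (intro span_add span_diff span_smult) (auto intro: span_base)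
  finally show ?case using down.hyps by simp
qed

section \<open>Part (I) at level 1\<close>

text \<open>The powers Y^j, j < k.  Because Y satisfies a monic polynomial of degree k with
  invertible constant term q_0, their span contains all integer powers of Y.\<close>
definition Y_powers :: "'a set" where
  "Y_powers = (\<lambda>j. Y ^ j) ` {..<k}"

lemma Y_power_in: "j < k \<Longrightarrow> Y ^ j \<in> Y_powers"
  unfolding Y_powers_def by simp

lemma Y_mult_span: assumes "x \<in> sp Y_powers" shows "Y * x \<in> sp Y_powers"
proof (rule span_lmult[OF assms])
  fix g assume "g \<in> Y_powers"
  then obtain j where j: "j < k" "g = Y ^ j" unfolding Y_powers_def by auto
  show "Y * g \<in> sp Y_powers"
  proof (cases "Suc j < k")
    case True then show ?thesis using j Y_power_in[of "Suc j"] by (simp add: span_base)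
  next
    case False
    then have "Suc j = k" using j by simp
    then have "Y * g = Y ^ k" using j by (metis power_Suc)
    moreover have "Y ^ k \<in> sp Y_powers"
      unfolding Y_poly by (intro span_sum span_smult span_base Y_power_in) auto
    ultimately show ?thesis by simp
  qed
qed

lemma Yinv_span: "Yinv \<in> sp Y_powers"
proof -
  obtain k' where kk: "k = Suc k'" using k_pos by (cases k) auto
  obtain u where u: "qq 0 * u = 1" using qq0_unit unfolding dvd_def by (metis mult.commute)
  have cancel: "Yinv * (\<phi> c * (Y * Y ^ i)) = \<phi> c * Y ^ i" for c i
  proof -
    have "Yinv * (\<phi> c * (Y * Y ^ i)) = \<phi> c * ((Yinv * Y) * Y ^ i)"
      by (simp only: phi_central_left mult.assoc)
    then show ?thesis using Y_inverse by simp
  qed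
  have "Y ^ k = (\<Sum>i<Suc k'. \<phi> (qq i) * Y ^ i)" using Y_poly kk by simp
  also have "\<dots> = (\<Sum>i<k'. \<phi> (qq (Suc i)) * Y ^ Suc i) + \<phi> (qq 0)"
    unfolding sum.lessThan_Suc_shift by (simp add: add.commute)
  finally have Yk: "Y ^ k = \<dots>" .
  have "Y ^ k' = Yinv * Y ^ k" unfolding kk using Y_inverse by (simp add: mult.assoc[symmetric])
  also have "\<dots> = Yinv * ((\<Sum>i<k'. \<phi> (qq (Suc i)) * Y ^ Suc i) + \<phi> (qq 0))"
    unfolding Yk ..
  also have "\<dots> = (\<Sum>i<k'. \<phi> (qq (Suc i)) * Y ^ i) + \<phi> (qq 0) * Yinv"
    by (simp add: distrib_left sum_distrib_left cancel phi_central[symmetric])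
  finally have "\<phi> (qq 0) * Yinv = Y ^ k' - (\<Sum>i<k'. \<phi> (qq (Suc i)) * Y ^ i)"
    by (simp add: algebra_simps)
  moreover have "Y ^ k' - (\<Sum>i<k'. \<phi> (qq (Suc i)) * Y ^ i) \<in> sp Y_powers"
    by (intro span_diff span_sum span_smult span_base Y_power_in) (auto simp: kk)
  ultimately have "\<phi> u * (\<phi> (qq 0) * Yinv) \<in> sp Y_powers" by (simp add: span_smult)
  moreover have "\<phi> u * \<phi> (qq 0) = 1" using u phi_mult[of u "qq 0"] phi_1 by (simp add: mult.commute)
  ultimately show ?thesis by (simp add: mult.assoc[symmetric])
qed

lemma Yinv_mult_span: assumes "x \<in> sp Y_powers" shows "Yinv * x \<in> sp Y_powers"
proof (rule span_lmult[OF assms])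
  fix g assume "g \<in> Y_powers"
  then obtain j where j: "j < k" "g = Y ^ j" unfolding Y_powers_def by auto
  show "Yinv * g \<in> sp Y_powers"
  proof (cases j)
    case 0 then show ?thesis using j Yinv_span by simp
  next
    case (Suc j')
    then have "Yinv * g = Y ^ j'" using j Y_inverse by (simp add: mult.assoc[symmetric])
    then show ?thesis using j Suc Y_power_in[of j'] by (simp add: span_base)
  qed
qed

lemma zpow_Y_span: "zpow Y Yinv p \<in> sp Y_powers"
proof (induction p rule: int_induct[where k = 0])
  case base then show ?case using Y_power_in[of 0] k_pos by (simp add: span_base)
next
  case (step1 p) then show ?case using Y_mult_span zpow_succ[OF Y_inverse] by simp
next
  case (step2 p) then show ?case using Yinv_mult_span zpow_pred[OF Y_inverse] by simp
qed

lemma eJe_level1: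
  assumes "gen 1" shows "e 1 * Jpow 1 p * e 1 \<in> sp (low_mon_e 1)"
proof -
  have "zpow Y Yinv p * e 1 \<in> sp ((\<lambda>j. Y ^ j * e 1) ` {..<k})"
    by (rule span_rmult[OF zpow_Y_span]) (auto simp: Y_powers_def intro: span_base)
  then have "e 1 * (zpow Y Yinv p * e 1) \<in> sp (low_mon_e 1)"
  proof (rule span_lmult)
    fix g assume "g \<in> (\<lambda>j. Y ^ j * e 1) ` {..<k}"
    then obtain j where "j < k" "g = Y ^ j * e 1" by auto
    then have "e 1 * g = \<phi> (A j) * e 1" using e1_Ypow_e1[OF assms] by (simp add: mult.assoc)
    moreover have "e 1 \<in> low_mon_e 1" unfolding low_mon_e_def by auto
    ultimately show "e 1 * g \<in> sp (low_mon_e 1)" by (simp add: span_smult span_base)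
  qed
  then show ?thesis by (simp add: mult.assoc)
qed

section \<open>Part (I): the induction step from level j to level j + 1\<close>

text \<open>Auxiliary generators for the step: the element X_j (Y_{j+1}')^q e_{j+1} is spanned by
  elements of these three shapes with |t| \<le> |q|.\<close>
definition step_gens :: "nat \<Rightarrow> int \<Rightarrow> 'a set" where
  "step_gens j N = {mon s j * Jpow (Suc j) t * e (Suc j) | s t. \<bar>t\<bar> \<le> N}
     \<union> {mon s j * e j * Jpow j t * e (Suc j) | s t. True}
     \<union> {mon s j * X j * e (Suc j) | s. True}"

lemma step_gens_cases:
  assumes "g \<in> step_gens j N"
  obtains (J_next) s t where "g = mon s j * Jpow (Suc j) t * e (Suc j)" "\<bar>t\<bar> \<le> N"
    | (e_J) s t where "g = mon s j * e j * Jpow j t * e (Suc j)"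
    | (X) s where "g = mon s j * X j * e (Suc j)"
  using assms unfolding step_gens_def by blast

lemma step_gens_mono: "N \<le> N' \<Longrightarrow> step_gens j N \<subseteq> step_gens j N'"
  unfolding step_gens_def by (intro Un_mono) fastforce+

context
  fixes j :: nat
  assumes gj: "gen j" and gj1: "gen (Suc j)"
    and partI: "\<And>p. e j * Jpow j p * e j \<in> sp (low_mon_e j)"
    and partIII: "\<And>p. e j * Jpow j p * X j \<in> sp (e_mon j \<bar>p\<bar>)"
begin

lemma step_bounds: "1 \<le> j" "j \<le> n" "Suc j \<le> n" "1 \<le> Suc j"
  using gj gj1 by auto

lemma mon_commute_next:
  "mon s j * e (Suc j) = e (Suc j) * mon s j" "mon s j * X (Suc j) = X (Suc j) * mon s j"
  "mon s j * Xinv (Suc j) = Xinv (Suc j) * mon s j"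
  using mon_commute_higher[OF gj1, of j] by auto

lemma low_mon_commute:
  "mon s (j - 1) * e (Suc j) = e (Suc j) * mon s (j - 1)"
  "mon s (j - 1) * e j = e j * mon s (j - 1)" "mon s (j - 1) * X j = X j * mon s (j - 1)"
  using mon_commute_higher[OF gj1, of "j - 1"] mon_commute_higher[OF gj, of "j - 1"] gj by auto

lemma Jpow_commute_next:
  "Jpow j t * e (Suc j) = e (Suc j) * Jpow j t" "Jpow j t * X (Suc j) = X (Suc j) * Jpow j t"
  "Jpow j t * Xinv (Suc j) = Xinv (Suc j) * Jpow j t"
  using Jpow_commute_higher[OF gj1, of j] step_bounds by auto

lemma commute_next_left:
  "Xinv (Suc j) * (mon s j * w) = mon s j * (Xinv (Suc j) * w)"
  "e (Suc j) * (mon s j * w) = mon s j * (e (Suc j) * w)"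
  "e (Suc j) * (mon s (j - 1) * w) = mon s (j - 1) * (e (Suc j) * w)"
  "e j * (mon s (j - 1) * w) = mon s (j - 1) * (e j * w)"
  by (simp_all only: mult.assoc[symmetric] mon_commute_next low_mon_commute)

lemma e_next_e_e_next: "e (Suc j) * e j * e (Suc j) = e (Suc j)"
  using e_e_e[OF gj1 gj] by simp

lemma e_next_e_e_next_left: "e (Suc j) * (e j * (e (Suc j) * x)) = e (Suc j) * x"
  using e_next_e_e_next by (simp add: mult.assoc[symmetric])

lemma target_mem: "mon s j * e (Suc j) \<in> sp (low_mon_e (Suc j))"
  unfolding low_mon_e_def by (intro span_base) auto

lemma target_lmult:
  assumes "x \<in> sp (low_mon_e (Suc j))" shows "mon s j * x \<in> sp (low_mon_e (Suc j))"
proof (rule span_lmult[OF assms])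
  fix g assume "g \<in> low_mon_e (Suc j)"
  then obtain s' where "g = mon s' j * e (Suc j)" unfolding low_mon_e_def by auto
  then have "mon s j * g = mon (\<lambda>x. s x + s' x) j * e (Suc j)"
    using mon_mult[OF step_bounds(2)] by (simp add: mult.assoc[symmetric])
  then show "mon s j * g \<in> sp (low_mon_e (Suc j))" using target_mem by simp
qed

lemma target_rmult:
  assumes "x \<in> sp (low_mon_e (Suc j))" shows "x * Jpow j t \<in> sp (low_mon_e (Suc j))"
proof (rule span_rmult[OF assms])
  fix g assume "g \<in> low_mon_e (Suc j)"
  then obtain s' where "g = mon s' j * e (Suc j)" unfolding low_mon_e_def by auto
  then have "g * Jpow j t = (mon s' j * Jpow j t) * e (Suc j)"
    using Jpow_commute_next(1) by (simp add: mult.assoc)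
  also have "\<dots> = mon (s'(j := s' j + t)) j * e (Suc j)" using mon_mult_Jpow[of j j s' t] step_bounds by simp
  finally show "g * Jpow j t \<in> sp (low_mon_e (Suc j))" using target_mem by simp
qed

text \<open>e_{j+1} e_j absorbs a monomial in Y_1', ..., Y_{j+1}' placed before e_{j+1}: the factor
  (Y_{j+1}')^v slides through e_j as (Y_j')^{-v}, after which e_{j+1} e_j e_{j+1} = e_{j+1}.\<close>
lemma ee_mon_e: "e (Suc j) * e j * (mon s (Suc j) * e (Suc j)) \<in> sp (low_mon_e (Suc j))"
proof -
  define m r v where "m = mon s (j - 1)" and "r = s j" and "v = s (Suc j)"
  have mon: "mon s (Suc j) = m * (Jpow j r * Jpow (Suc j) v)"
    unfolding m_def r_def v_def mon_Suc by (simp add: mon_split[OF gj] mult.assoc)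
  have "Jpow j r * Jpow (Suc j) v = Jpow (Suc j) v * Jpow j r" using Jpow_commute step_bounds by simp
  then have "e j * (Jpow j r * (Jpow (Suc j) v * e (Suc j))) = e j * Jpow (Suc j) v * (Jpow j r * e (Suc j))"
    by (simp add: mult.assoc[symmetric])
  also have "\<dots> = e j * (Jpow j (- v) * Jpow j r) * e (Suc j)"
    using Jpow_next_e(2)[OF gj] by (simp add: mult.assoc)
  also have "\<dots> = e j * Jpow j (r - v) * e (Suc j)" using Jpow_add[OF step_bounds(1,2), of "- v" r] by simp
  finally have slide: "e j * (Jpow j r * (Jpow (Suc j) v * e (Suc j))) = e j * Jpow j (r - v) * e (Suc j)" .
  have "e (Suc j) * e j * (mon s (Suc j) * e (Suc j))
      = m * (e (Suc j) * (e j * (Jpow j r * (Jpow (Suc j) v * e (Suc j)))))"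
    unfolding mon m_def using commute_next_left by (simp add: mult.assoc)
  also have "\<dots> = m * (e (Suc j) * (e j * (e (Suc j) * Jpow j (r - v))))"
    unfolding slide using Jpow_commute_next(1) by (simp add: mult.assoc)
  also have "\<dots> = (m * Jpow j (r - v)) * e (Suc j)"
    using e_next_e_e_next_left Jpow_commute_next(1) by (simp add: mult.assoc)
  also have "\<dots> = mon (s(j := r - v)) j * e (Suc j)" unfolding m_def using mon_extend[OF gj] by simp
  finally show ?thesis using target_mem by simp
qed

lemma ee_span_mon_e:
  assumes "x \<in> sp (mon_e (Suc j) N)"
  shows "e (Suc j) * e j * (mon s j * x) \<in> sp (low_mon_e (Suc j))"
proof -
  have "(e (Suc j) * e j * mon s j) * x \<in> sp (low_mon_e (Suc j))"
  proof (rule span_lmult[OF assms])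
    fix g assume "g \<in> mon_e (Suc j) N"
    then obtain s' where g: "g = mon s' (Suc j) * e (Suc j)" unfolding mon_e_def by auto
    let ?s = "(\<lambda>x. s x + s' x)(Suc j := s' (Suc j))"
    have "mon s j * mon s' (Suc j) = mon (\<lambda>x. s x + s' x) j * Jpow (Suc j) (s' (Suc j))"
      unfolding mon_Suc using mon_mult[OF step_bounds(2)] by (simp add: mult.assoc[symmetric])
    also have "\<dots> = mon ?s (Suc j)" unfolding mon_Suc using mon_update_above[of j "Suc j"] by simp
    finally have "e (Suc j) * e j * mon s j * g = e (Suc j) * e j * (mon ?s (Suc j) * e (Suc j))"
      using g by (metis mult.assoc)
    then show "e (Suc j) * e j * mon s j * g \<in> sp (low_mon_e (Suc j))" using ee_mon_e by simp
  qed
  then show ?thesis by (simp add: mult.assoc)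
qed

lemma e_next_sandwich_e_mon:
  assumes "x \<in> sp (e_mon j N)" shows "e (Suc j) * x * e (Suc j) \<in> sp (low_mon_e (Suc j))"
proof (rule span_sandwich[OF assms])
  fix g assume "g \<in> e_mon j N"
  then obtain s where "g = e j * mon s j" unfolding e_mon_def by auto
  then have "e (Suc j) * g * e (Suc j) = e (Suc j) * e j * e (Suc j) * mon s j"
    using mon_commute_next(1) by (simp add: mult.assoc)
  also have "\<dots> = mon s j * e (Suc j)" using e_next_e_e_next mon_commute_next(1) by simp
  finally show "e (Suc j) * g * e (Suc j) \<in> sp (low_mon_e (Suc j))" using target_mem by simp
qed

lemma e_next_sandwich_low_mon_e:
  assumes "x \<in> sp (low_mon_e j)" shows "e (Suc j) * x * e (Suc j) \<in> sp (low_mon_e (Suc j))"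
proof (rule span_sandwich[OF assms])
  fix g assume "g \<in> low_mon_e j"
  then obtain s where "g = mon s (j - 1) * e j" unfolding low_mon_e_def by auto
  then have "e (Suc j) * g * e (Suc j) = mon s (j - 1) * (e (Suc j) * e j * e (Suc j))"
    using commute_next_left by (simp add: mult.assoc)
  also have "\<dots> = mon (s(j := 0)) j * e (Suc j)" using e_next_e_e_next mon_extend[OF gj, of s 0] by simp
  finally show "e (Suc j) * g * e (Suc j) \<in> sp (low_mon_e (Suc j))" using target_mem by simp
qed

lemma ee_mon_X_e: "e (Suc j) * e j * (mon s j * (X j * e (Suc j))) \<in> sp (low_mon_e (Suc j))"
proof -
  have "e (Suc j) * e j * (mon s j * (X j * e (Suc j)))
      = mon (s(j := 0)) j * (e (Suc j) * (e j * Jpow j (s j) * X j) * e (Suc j))"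
    unfolding mon_split[OF gj, of s] mon_extend[OF gj, of s 0, symmetric]
    using commute_next_left by (simp add: mult.assoc)
  then show ?thesis using target_lmult[OF e_next_sandwich_e_mon[OF partIII]] by simp
qed

lemma ee_mon_e_e: "e (Suc j) * e j * (mon s j * (e j * e (Suc j))) \<in> sp (low_mon_e (Suc j))"
proof -
  have "e (Suc j) * e j * (mon s j * (e j * e (Suc j)))
      = mon (s(j := 0)) j * (e (Suc j) * (e j * Jpow j (s j) * e j) * e (Suc j))"
    unfolding mon_split[OF gj, of s] mon_extend[OF gj, of s 0, symmetric]
    using commute_next_left by (simp add: mult.assoc)
  then show ?thesis using target_lmult[OF e_next_sandwich_low_mon_e[OF partI]] by simp
qed

lemma J_next_unfold:
  "J (Suc j) * w = X j * (J j * (X j * w))" "Jinv (Suc j) * w = Xinv j * (Jinv j * (Xinv j * w))"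
  using Yp_Suc[of j Y X] Yp_Suc[of j Yinv Xinv] step_bounds by (simp_all add: mult.assoc)

lemma Xinv_J_next:
  "Xinv j * (J (Suc j) * w) = J j * (X j * w)" "X j * (Jinv (Suc j) * w) = Jinv j * (Xinv j * w)"
  unfolding J_next_unfold using X_cancel[OF gj] by (simp_all add: mult.assoc)

lemma e_next_X: "e (Suc j) * X j = e (Suc j) * e j * Xinv (Suc j)"
proof -
  have "e (Suc j) * e j * Xinv (Suc j) = e (Suc j) * X j * (X (Suc j) * Xinv (Suc j))"
    using e_e_X_X[OF gj gj1] by (simp add: mult.assoc)
  then show ?thesis using X_inverse[OF gj1] by simp
qed

lemma Xinv_next_e_e: "Xinv (Suc j) * (e j * e (Suc j)) = X j * e (Suc j)"
proof -
  have "Xinv (Suc j) * (e j * e (Suc j)) = Xinv (Suc j) * (X (Suc j) * (X j * e (Suc j)))"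
    using X_X_e[OF gj1 gj] by (simp add: mult.assoc)
  then show ?thesis using X_cancel[OF gj1] by simp
qed

lemma e_next_X_e_next: "e (Suc j) * (X j * e (Suc j)) = lmi * e (Suc j)"
proof -
  have "e (Suc j) * (X j * e (Suc j)) = e (Suc j) * e j * (Xinv (Suc j) * e (Suc j))"
    using e_next_X by (simp add: mult.assoc[symmetric])
  also have "\<dots> = lmi * (e (Suc j) * e j * e (Suc j))"
    using Xinv_e[OF gj1] by (simp add: phi_central_left mult.assoc)
  finally show ?thesis using e_next_e_e_next by simp
qed

lemma Xinv_next_X_e:
  "Xinv (Suc j) * (X j * e (Suc j)) = e j * e (Suc j) - \<delta> * (X j * e (Suc j)) + \<delta> * (lmi * e (Suc j))"
proof -
  have "Xinv (Suc j) * (X j * e (Suc j)) = Xinv (Suc j) * (Xinv (Suc j) * (e j * e (Suc j)))"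
    using Xinv_next_e_e by simp
  also have "\<dots> = X (Suc j) * (Xinv (Suc j) * (e j * e (Suc j))) - \<delta> * (Xinv (Suc j) * (e j * e (Suc j)))
      + \<delta> * (e (Suc j) * Xinv (Suc j) * (e j * e (Suc j)))"
    using Xinv_expand_left[OF gj1] by (simp add: mult.assoc)
  also have "\<dots> = e j * e (Suc j) - \<delta> * (X j * e (Suc j)) + \<delta> * (lmi * (e (Suc j) * e j * e (Suc j)))"
    using X_cancel[OF gj1] Xinv_next_e_e Xinv_e(2)[OF gj1] X_X_e[OF gj1 gj] by (simp add: mult.assoc)
  finally show ?thesis using e_next_e_e_next by simp
qed

lemma step_gens_lmult_Jpow:
  assumes "x \<in> sp (step_gens j N)" shows "Jpow j r * x \<in> sp (step_gens j N)"
proof (rule span_lmult[OF assms])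
  have J_mon: "Jpow j r * mon s j = mon (s(j := s j + r)) j" for s
    using Jpow_mult_mon[of j j r s] step_bounds by simp
  fix g assume "g \<in> step_gens j N"
  then show "Jpow j r * g \<in> sp (step_gens j N)"
    by (cases rule: step_gens_cases)
      (intro span_base, auto simp: step_gens_def J_mon mult.assoc[symmetric])+
qed

lemma Jpow_next_e_in_step_gens: "\<bar>q\<bar> \<le> N \<Longrightarrow> Jpow (Suc j) q * e (Suc j) \<in> sp (step_gens j N)"
  using mon_zero[of j] by (intro span_base) (auto simp: step_gens_def intro!: exI[of _ "\<lambda>_. 0"])

lemma e_Jpow_next_e_in_step_gens: "e j * Jpow (Suc j) q * e (Suc j) \<in> sp (step_gens j N)"
proof -
  have "e j * Jpow (Suc j) q * e (Suc j) = mon (\<lambda>_. 0) j * e j * Jpow j (- q) * e (Suc j)"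
    using Jpow_next_e(2)[OF gj] mon_zero by simp
  then show ?thesis by (intro span_base) (auto simp: step_gens_def)
qed

lemma X_e_in_step_gens: "X j * e (Suc j) \<in> sp (step_gens j N)"
  using mon_zero[of j] by (intro span_base) (auto simp: step_gens_def intro!: exI[of _ "\<lambda>_. 0"])

lemma X_Jpow_next_e: "X j * Jpow (Suc j) q * e (Suc j) \<in> sp (step_gens j \<bar>q\<bar>)"
proof (induction q rule: int_induct_from_zero)
  case zero then show ?case using X_e_in_step_gens by simp
next
  case (up p)
  let ?Z = "\<lambda>t. Jpow (Suc j) t * e (Suc j)"
  have "X j * Jpow (Suc j) (p + 1) * e (Suc j)
      = Xinv j * ?Z (p + 1) + \<delta> * ?Z (p + 1) - \<delta> * (e j * Jpow (Suc j) (p + 1) * e (Suc j))"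
    using X_expand_left[OF gj, of "?Z (p + 1)"] by (simp add: mult.assoc)
  also have "Xinv j * ?Z (p + 1) = Jpow j 1 * (X j * Jpow (Suc j) p * e (Suc j))"
    unfolding zpow_succ[OF J_Jinv[OF step_bounds(4,3)] Jinv_J[OF step_bounds(4,3)]] zpow_1 using Xinv_J_next
    by (simp add: mult.assoc)
  also have "Jpow j 1 * (X j * Jpow (Suc j) p * e (Suc j)) + \<delta> * ?Z (p + 1)
      - \<delta> * (e j * Jpow (Suc j) (p + 1) * e (Suc j)) \<in> sp (step_gens j (\<bar>p\<bar> + 1))"
    using span_mono[OF step_gens_lmult_Jpow[OF up.IH, of 1] step_gens_mono[of "\<bar>p\<bar>" "\<bar>p\<bar> + 1"]]
    by (intro span_add span_diff span_smult Jpow_next_e_in_step_gens e_Jpow_next_e_in_step_gens) auto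
  finally show ?case using up.hyps by simp
next
  case (down p)
  let ?Z = "\<lambda>t. Jpow (Suc j) t * e (Suc j)"
  have "X j * Jpow (Suc j) (p - 1) * e (Suc j) = Jpow j (- 1) * (Xinv j * ?Z p)"
    unfolding zpow_pred[OF J_Jinv[OF step_bounds(4,3)] Jinv_J[OF step_bounds(4,3)]] zpow_minus_1 using Xinv_J_next
    by (simp add: mult.assoc)
  also have "Xinv j * ?Z p = X j * Jpow (Suc j) p * e (Suc j) - \<delta> * ?Z p + \<delta> * (e j * Jpow (Suc j) p * e (Suc j))"
    using Xinv_expand_left[OF gj, of "?Z p"] by (simp add: mult.assoc)
  finally have eq: "X j * Jpow (Suc j) (p - 1) * e (Suc j) = Jpow j (- 1) * (X j * Jpow (Suc j) p * e (Suc j)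
      - \<delta> * ?Z p + \<delta> * (e j * Jpow (Suc j) p * e (Suc j)))" .
  have "X j * Jpow (Suc j) p * e (Suc j) - \<delta> * ?Z p + \<delta> * (e j * Jpow (Suc j) p * e (Suc j))
      \<in> sp (step_gens j \<bar>p\<bar>)"
    by (intro span_add span_diff span_smult down.IH Jpow_next_e_in_step_gens e_Jpow_next_e_in_step_gens) simp
  then have "X j * Jpow (Suc j) (p - 1) * e (Suc j) \<in> sp (step_gens j \<bar>p\<bar>)"
    unfolding eq by (rule step_gens_lmult_Jpow)
  moreover have "\<bar>p\<bar> \<le> \<bar>p - 1\<bar>" using down.hyps by simp
  ultimately show ?case using span_mono step_gens_mono by blast
qed

lemma Xinv_Jpow_next_e: "Xinv j * Jpow (Suc j) q * e (Suc j) \<in> sp (step_gens j \<bar>q\<bar>)"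
proof -
  have "Xinv j * Jpow (Suc j) q * e (Suc j) = X j * Jpow (Suc j) q * e (Suc j)
      - \<delta> * (Jpow (Suc j) q * e (Suc j)) + \<delta> * (e j * Jpow (Suc j) q * e (Suc j))"
    using Xinv_expand_left[OF gj, of "Jpow (Suc j) q * e (Suc j)"] by (simp add: mult.assoc)
  also have "\<dots> \<in> sp (step_gens j \<bar>q\<bar>)"
    by (intro span_add span_diff span_smult X_Jpow_next_e Jpow_next_e_in_step_gens
        e_Jpow_next_e_in_step_gens) simp
  finally show ?thesis .
qed

context
  fixes M :: int
  assumes smaller: "\<And>t. \<bar>t\<bar> \<le> M \<Longrightarrow> e (Suc j) * Jpow (Suc j) t * e (Suc j) \<in> sp (low_mon_e (Suc j))"
begin

lemma ee_Xinv_step_gen: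
  assumes "g \<in> step_gens j M"
  shows "e (Suc j) * e j * (Xinv (Suc j) * g) \<in> sp (low_mon_e (Suc j))"
  using assms
proof (cases rule: step_gens_cases)
  case (J_next s t)
  text \<open>Part (II) at level j+1 is available for exponents up to |t| \<le> M.\<close>
  have II: "X (Suc j) * Jpow (Suc j) t * e (Suc j) \<in> sp (mon_e (Suc j) \<bar>t\<bar>)"
    using X_Jpow_e[OF gj1] smaller J_next(2) span_mono low_mon_e_subset_mon_e[OF gj1] by force
  have "Xinv (Suc j) * (Jpow (Suc j) t * e (Suc j)) = X (Suc j) * Jpow (Suc j) t * e (Suc j)
      - \<delta> * (Jpow (Suc j) t * e (Suc j)) + \<delta> * (e (Suc j) * Jpow (Suc j) t * e (Suc j))"
    using Xinv_expand_left[OF gj1, of "Jpow (Suc j) t * e (Suc j)"] by (simp add: mult.assoc)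
  also have "\<dots> \<in> sp (mon_e (Suc j) \<bar>t\<bar>)"
    using II Jpow_e_in_mon_e[OF gj1, of t "\<bar>t\<bar>"] smaller[OF J_next(2)]
      span_mono low_mon_e_subset_mon_e[OF gj1, of "\<bar>t\<bar>"]
    by (intro span_add span_diff span_smult) (auto intro: span_base)
  finally have "e (Suc j) * e j * (mon s j * (Xinv (Suc j) * (Jpow (Suc j) t * e (Suc j))))
      \<in> sp (low_mon_e (Suc j))"
    by (rule ee_span_mon_e)
  then show ?thesis using J_next(1) commute_next_left by (simp add: mult.assoc)
next
  case (e_J s t)
  have "e (Suc j) * e j * (Xinv (Suc j) * g)
      = e (Suc j) * e j * (mon s j * (Xinv (Suc j) * (e j * e (Suc j)))) * Jpow j t"
    using e_J commute_next_left Jpow_commute_next(1) by (simp add: mult.assoc)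
  also have "\<dots> = e (Suc j) * e j * (mon s j * (X j * e (Suc j))) * Jpow j t"
    using Xinv_next_e_e by simp
  finally show ?thesis using target_rmult[OF ee_mon_X_e] by simp
next
  case (X s)
  have "e (Suc j) * e j * (mon s j * e (Suc j)) = mon s j * e (Suc j)"
    using mon_commute_next(1) e_next_e_e_next by (simp add: mult.assoc[symmetric])
  then have "e (Suc j) * e j * (mon s j * (lmi * e (Suc j))) = lmi * (mon s j * e (Suc j))"
    by (simp add: phi_central_left mult.assoc)
  define c where "c = lmi * e (Suc j)"
  have "e (Suc j) * e j * (Xinv (Suc j) * g) = e (Suc j) * e j * (mon s j * (Xinv (Suc j) * (X j * e (Suc j))))"
    using X commute_next_left by (simp add: mult.assoc)
  also have "\<dots> = e (Suc j) * e j * (mon s j * (e j * e (Suc j)))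
      - \<delta> * (e (Suc j) * e j * (mon s j * (X j * e (Suc j)))) + \<delta> * (e (Suc j) * e j * (mon s j * c))"
    unfolding Xinv_next_X_e c_def[symmetric] by (simp add: algebra_simps phi_central_left)
  also have "e (Suc j) * e j * (mon s j * c) = lmi * (mon s j * e (Suc j))"
    unfolding c_def by fact
  finally show ?thesis by (simp add: span_add span_diff span_smult ee_mon_e_e ee_mon_X_e target_mem)
qed

lemma e_step_gen:
  assumes "g \<in> step_gens j M" shows "e (Suc j) * g \<in> sp (low_mon_e (Suc j))"
  using assms
proof (cases rule: step_gens_cases)
  case (J_next s t)
  then have "e (Suc j) * g = mon s j * (e (Suc j) * Jpow (Suc j) t * e (Suc j))"
    using commute_next_left by (simp add: mult.assoc)
  then show ?thesis using target_lmult smaller J_next(2) by simp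
next
  case (e_J s t)
  then have "e (Suc j) * g = mon s j * e (Suc j) * Jpow j t"
    using commute_next_left Jpow_commute_next e_next_e_e_next_left by (simp add: mult.assoc)
  then show ?thesis using target_rmult[OF target_mem] by simp
next
  case (X s)
  then have "e (Suc j) * g = lmi * (mon s j * e (Suc j))"
    using commute_next_left e_next_X_e_next by (simp add: mult.assoc phi_central_left)
  then show ?thesis using span_smult[OF target_mem] by simp
qed

lemma ee_step_gen:
  assumes "g \<in> step_gens j M" shows "e (Suc j) * e j * g \<in> sp (low_mon_e (Suc j))"
  using assms
proof (cases rule: step_gens_cases)
  case (J_next s t)
  have "mon (s(Suc j := t)) (Suc j) = mon s j * Jpow (Suc j) t"
    unfolding mon_Suc using mon_update_above[of j "Suc j" s t] by simp
  then show ?thesis using J_next(1) ee_mon_e[of "s(Suc j := t)"] by (simp add: mult.assoc)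
next
  case (e_J s t)
  then show ?thesis using target_rmult[OF ee_mon_e_e] Jpow_commute_next by (simp add: mult.assoc)
next
  case (X s)
  then show ?thesis using ee_mon_X_e by (simp add: mult.assoc)
qed

text \<open>The step for positive exponent M + 1: e_{j+1} Y_{j+1}' = e_{j+1} e_j X_{j+1}^{-1} Y_j' X_j,
  and X_j (Y_{j+1}')^M e_{j+1} lies in the span of step_gens j M.\<close>
lemma eJe_next_pos:
  assumes "0 \<le> M"
  shows "e (Suc j) * Jpow (Suc j) (M + 1) * e (Suc j) \<in> sp (low_mon_e (Suc j))"
proof -
  define y where "y = Jpow j 1 * (X j * Jpow (Suc j) M * e (Suc j))"
  have y: "y \<in> sp (step_gens j M)"
    unfolding y_def using step_gens_lmult_Jpow[OF X_Jpow_next_e[of M], of 1] assms by simp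
  have "e (Suc j) * Jpow (Suc j) (M + 1) * e (Suc j) = e (Suc j) * X j * y"
    unfolding y_def zpow_succ[OF J_Jinv[OF step_bounds(4,3)] Jinv_J[OF step_bounds(4,3)]] zpow_1
    using J_next_unfold by (simp add: mult.assoc)
  also have "\<dots> = (e (Suc j) * e j * Xinv (Suc j)) * y" unfolding e_next_X ..
  also have "\<dots> \<in> sp (low_mon_e (Suc j))"
    by (rule span_lmult[OF y]) (use ee_Xinv_step_gen in \<open>simp add: mult.assoc\<close>)
  finally show ?thesis .
qed

text \<open>The step for negative exponent -(M + 1), using the skein relation for X_j^{-1}.\<close>
lemma eJe_next_neg:
  assumes "0 \<le> M"
  shows "e (Suc j) * Jpow (Suc j) (- M - 1) * e (Suc j) \<in> sp (low_mon_e (Suc j))"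
proof -
  define y where "y = Jpow j (- 1) * (Xinv j * Jpow (Suc j) (- M) * e (Suc j))"
  have y: "y \<in> sp (step_gens j M)"
    unfolding y_def using step_gens_lmult_Jpow[OF Xinv_Jpow_next_e[of "- M"], of "- 1"] assms by simp
  have "e (Suc j) * Jpow (Suc j) (- M - 1) * e (Suc j) = e (Suc j) * Xinv j * y"
    unfolding y_def zpow_pred[OF J_Jinv[OF step_bounds(4,3)] Jinv_J[OF step_bounds(4,3)]] zpow_minus_1
    using J_next_unfold by (simp add: mult.assoc)
  also have "\<dots> = (e (Suc j) * e j * Xinv (Suc j)) * y - \<delta> * (e (Suc j) * y) + \<delta> * ((e (Suc j) * e j) * y)"
    unfolding Xinv_expand_right[OF gj, of "e (Suc j)"] e_next_X by (simp add: algebra_simps)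
  also have "\<dots> \<in> sp (low_mon_e (Suc j))"
  proof (intro span_add span_diff span_smult)
    show "(e (Suc j) * e j * Xinv (Suc j)) * y \<in> sp (low_mon_e (Suc j))"
      by (rule span_lmult[OF y]) (use ee_Xinv_step_gen in \<open>simp add: mult.assoc\<close>)
    show "e (Suc j) * y \<in> sp (low_mon_e (Suc j))"
      by (rule span_lmult[OF y]) (use e_step_gen in simp)
    show "(e (Suc j) * e j) * y \<in> sp (low_mon_e (Suc j))"
      by (rule span_lmult[OF y]) (use ee_step_gen in simp)
  qed
  finally show ?thesis .
qed

end

lemma eJe_step: "e (Suc j) * Jpow (Suc j) p * e (Suc j) \<in> sp (low_mon_e (Suc j))"
proof (induction "nat \<bar>p\<bar>" arbitrary: p rule: less_induct)
  case less
  have smaller: "e (Suc j) * Jpow (Suc j) t * e (Suc j) \<in> sp (low_mon_e (Suc j))"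
    if "\<bar>t\<bar> \<le> \<bar>p\<bar> - 1" for t
    using less that by simp
  consider "p = 0" | "0 < p" | "p < 0" by linarith
  then show ?case
  proof cases
    case 1
    then have "e (Suc j) * Jpow (Suc j) p * e (Suc j) = \<phi> (A 0) * (mon (\<lambda>_. 0) j * e (Suc j))"
      using e_square[OF gj1] mon_zero by simp
    then show ?thesis using span_smult[OF target_mem] by simp
  next
    case 2
    then show ?thesis using eJe_next_pos[of "\<bar>p\<bar> - 1", OF smaller] by simp
  next
    case 3
    then show ?thesis using eJe_next_neg[of "\<bar>p\<bar> - 1", OF smaller] by simp
  qed
qed

end

lemma eJe: "1 \<le> i \<Longrightarrow> i \<le> n - 1 \<Longrightarrow> e i * Jpow i p * e i \<in> sp (low_mon_e i)"
proof (induction i arbitrary: p rule: nat_induct_at_least)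
  case base then show ?case using eJe_level1 by simp
next
  case (Suc i)
  then have gi: "gen i" and gi1: "gen (Suc i)" by auto
  have partI: "e i * Jpow i t * e i \<in> sp (low_mon_e i)" for t using Suc by auto
  have partIII: "e i * Jpow i t * X i \<in> sp (e_mon i \<bar>t\<bar>)" for t using e_Jpow_X[OF gi] partI by blast
  show ?case using eJe_step[OF gi gi1 partI partIII] .
qed

end

theorem mainTheorem4:
  fixes n k :: nat
    and \<phi> :: "'r::comm_ring_1 \<Rightarrow> 'a::ring_1"
    and qp qi lam lami :: 'r and qq A :: "nat \<Rightarrow> 'r"
    and Y Yinv :: 'a and X Xinv e :: "nat \<Rightarrow> 'a"
    and i :: nat and p :: int
  assumes "1 \<le> n" and "1 \<le> k"
    and "qp * qi = 1" and "lam * lami = 1" and "qq 0 dvd 1"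
    and "lam - lami = (qp - qi) * (1 - A 0)"
    and "is_R_algebra \<phi>"
    and "cbmw_rels n k \<phi> qp qi lam lami qq A Y Yinv X Xinv e"
    and "1 \<le> i" and "i \<le> n - 1"
  shows "e i * zpow (Yp Y X i) (Yp Yinv Xinv i) p * e i
           \<in> rspan \<phi> {Ymon Y Yinv X Xinv s (i - 1) * e i | s. True} \<and>
         X i * zpow (Yp Y X i) (Yp Yinv Xinv i) p * e i
           \<in> rspan \<phi> {Ymon Y Yinv X Xinv s i * e i | s. \<bar>s i\<bar> \<le> \<bar>p\<bar>} \<and>
         e i * zpow (Yp Y X i) (Yp Yinv Xinv i) p * X i
           \<in> rspan \<phi> {e i * Ymon Y Yinv X Xinv s i | s. \<bar>s i\<bar> \<le> \<bar>p\<bar>}"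
proof -
  interpret cbmw \<phi> n k qp qi lam lami qq A Y Yinv X Xinv e
    by unfold_locales (use assms in auto)
  have gi: "gen i" using assms by simp
  have I: "e i * Jpow i t * e i \<in> sp (low_mon_e i)" for t
    using eJe assms by blast
  then have "X i * Jpow i p * e i \<in> sp (mon_e i \<bar>p\<bar>)"
    and "e i * Jpow i p * X i \<in> sp (e_mon i \<bar>p\<bar>)"
    using X_Jpow_e[OF gi] e_Jpow_X[OF gi] by blast+
  then show ?thesis using I[of p] unfolding low_mon_e_def mon_e_def e_mon_def by blast
qed

end
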